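(* Let $I$ be a left ideal of a $*$-algebra $\mathcal A$. The following are equivalent: (1) $I$ is real and $\dim(\mathcal A/I)<\infty$; (2) there exist a finite-dimensional $*$-representation $\pi$ and $v\in V_\pi$ such that $I=\mathcal I_{\mathrm{left}}(\pi,v)$ and $\pi(\mathcal A)v=V_\pi$. Moreover, for any class $\mathcal C$ of $*$-representations: if $\pi\in\mathcal C$ and $v\in V_\pi$ satisfy $\pi(\mathcal A)v=V_\pi$, and $J\subseteq\mathcal I_{\mathrm{left}}(\pi,v)$ is a two-sided ideal, then $J\subseteq\ker\pi$. In particular, if $\mathcal I_{\mathrm{left}}(\pi,v)$ is a two-sided ideal, then $\ker\pi=\mathcal I_{\mathrm{left}}(\pi,v)$.
   Context: $\mathbb F\in\{\mathbb R,\mathbb C\}$. A $*$-algebra is a unital associative $\mathbb F$-algebra with involution. A left ideal $I$ is real if whenever $a_1,\dots,a_n\in\mathcal A$ and $\sum_j a_j^*a_j\in I+I^*$, every $a_j\in I$. A $*$-representation $\pi$ is a unital $*$-homomorphism from $\mathcal A$ into the $*$-algebra of adjointable linear operators on a pre-Hilbert space $V_\pi$ over $\mathbb F$; it is finite-dimensional if $\dim V_\pi<\infty$. For $\pi$ and $v\in V_\pi$, $\mathcal I_{\mathrm{left}}(\pi,v)=\{a\in\mathcal A:\pi(a)v=0\}$. *)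

theory Defs
  imports Complex_Main
begin

text \<open>Scalars: the field F is modelled as a subset K of the complex numbers,
  either the reals or all of the complex numbers. Conjugation is cnj.\<close>

definition scalar_field :: "complex set \<Rightarrow> bool" where
  "scalar_field K \<longleftrightarrow> K = \<real> \<or> K = UNIV"

definition star_algebra :: "complex set \<Rightarrow> (complex \<Rightarrow> 'a::ring_1 \<Rightarrow> 'a) \<Rightarrow> ('a \<Rightarrow> 'a) \<Rightarrow> bool" where
  "star_algebra K sm st \<longleftrightarrow> scalar_field K \<and>
     (\<forall>c\<in>K. \<forall>a b. sm c (a + b) = sm c a + sm c b) \<and>
     (\<forall>c\<in>K. \<forall>d\<in>K. \<forall>a. sm (c + d) a = sm c a + sm d a) \<and>
     (\<forall>c\<in>K. \<forall>d\<in>K. \<forall>a. sm (c * d) a = sm c (sm d a)) \<and>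
     (\<forall>a. sm 1 a = a) \<and>
     (\<forall>c\<in>K. \<forall>a b. sm c (a * b) = sm c a * b \<and> sm c (a * b) = a * sm c b) \<and>
     (\<forall>a b. st (a + b) = st a + st b) \<and>
     (\<forall>c\<in>K. \<forall>a. st (sm c a) = sm (cnj c) (st a)) \<and>
     (\<forall>a b. st (a * b) = st b * st a) \<and>
     (\<forall>a. st (st a) = a)"

definition left_ideal :: "complex set \<Rightarrow> (complex \<Rightarrow> 'a::ring_1 \<Rightarrow> 'a) \<Rightarrow> 'a set \<Rightarrow> bool" where
  "left_ideal K sm I \<longleftrightarrow> 0 \<in> I \<and> (\<forall>x\<in>I. \<forall>y\<in>I. x + y \<in> I) \<and> (\<forall>x\<in>I. - x \<in> I) \<and>
     (\<forall>c\<in>K. \<forall>x\<in>I. sm c x \<in> I) \<and> (\<forall>a. \<forall>x\<in>I. a * x \<in> I)"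

definition two_sided_ideal :: "complex set \<Rightarrow> (complex \<Rightarrow> 'a::ring_1 \<Rightarrow> 'a) \<Rightarrow> 'a set \<Rightarrow> bool" where
  "two_sided_ideal K sm J \<longleftrightarrow> left_ideal K sm J \<and> (\<forall>a. \<forall>x\<in>J. x * a \<in> J)"

definition real_ideal :: "('a::ring_1 \<Rightarrow> 'a) \<Rightarrow> 'a set \<Rightarrow> bool" where
  "real_ideal st I \<longleftrightarrow>
     (\<forall>(n::nat) (a::nat \<Rightarrow> 'a). (\<Sum>j<n. st (a j) * a j) \<in> {x + st y | x y. x \<in> I \<and> y \<in> I}
        \<longrightarrow> (\<forall>j<n. a j \<in> I))"

definition finite_codim :: "complex set \<Rightarrow> (complex \<Rightarrow> 'a::ring_1 \<Rightarrow> 'a) \<Rightarrow> 'a set \<Rightarrow> bool" where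
  "finite_codim K sm I \<longleftrightarrow>
     (\<exists>S. finite S \<and> (\<forall>a. \<exists>c. (\<forall>s\<in>S. c s \<in> K) \<and> a - (\<Sum>s\<in>S. sm (c s) s) \<in> I))"

definition pre_hilbert :: "complex set \<Rightarrow> 'v::ab_group_add set \<Rightarrow> (complex \<Rightarrow> 'v \<Rightarrow> 'v) \<Rightarrow> ('v \<Rightarrow> 'v \<Rightarrow> complex) \<Rightarrow> bool" where
  "pre_hilbert K V vsm ip \<longleftrightarrow>
     0 \<in> V \<and> (\<forall>x\<in>V. \<forall>y\<in>V. x + y \<in> V) \<and> (\<forall>x\<in>V. - x \<in> V) \<and>
     (\<forall>c\<in>K. \<forall>x\<in>V. vsm c x \<in> V) \<and>
     (\<forall>c\<in>K. \<forall>x\<in>V. \<forall>y\<in>V. vsm c (x + y) = vsm c x + vsm c y) \<and>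
     (\<forall>c\<in>K. \<forall>d\<in>K. \<forall>x\<in>V. vsm (c + d) x = vsm c x + vsm d x) \<and>
     (\<forall>c\<in>K. \<forall>d\<in>K. \<forall>x\<in>V. vsm (c * d) x = vsm c (vsm d x)) \<and>
     (\<forall>x\<in>V. vsm 1 x = x) \<and>
     (\<forall>x\<in>V. \<forall>y\<in>V. ip x y \<in> K) \<and>
     (\<forall>x\<in>V. \<forall>y\<in>V. \<forall>z\<in>V. ip (x + y) z = ip x z + ip y z) \<and>
     (\<forall>c\<in>K. \<forall>x\<in>V. \<forall>y\<in>V. ip (vsm c x) y = c * ip x y) \<and>
     (\<forall>x\<in>V. \<forall>y\<in>V. ip y x = cnj (ip x y)) \<and>
     (\<forall>x\<in>V. Im (ip x x) = 0 \<and> Re (ip x x) \<ge> 0) \<and>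
     (\<forall>x\<in>V. ip x x = 0 \<longrightarrow> x = 0)"

definition fin_dim :: "complex set \<Rightarrow> 'v::ab_group_add set \<Rightarrow> (complex \<Rightarrow> 'v \<Rightarrow> 'v) \<Rightarrow> bool" where
  "fin_dim K V vsm \<longleftrightarrow>
     (\<exists>S. finite S \<and> S \<subseteq> V \<and> (\<forall>x\<in>V. \<exists>c. (\<forall>s\<in>S. c s \<in> K) \<and> x = (\<Sum>s\<in>S. vsm (c s) s)))"

definition star_rep :: "complex set \<Rightarrow> (complex \<Rightarrow> 'a::ring_1 \<Rightarrow> 'a) \<Rightarrow> ('a \<Rightarrow> 'a) \<Rightarrow>
    'v::ab_group_add set \<Rightarrow> (complex \<Rightarrow> 'v \<Rightarrow> 'v) \<Rightarrow> ('v \<Rightarrow> 'v \<Rightarrow> complex) \<Rightarrow> ('a \<Rightarrow> 'v \<Rightarrow> 'v) \<Rightarrow> bool" where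
  "star_rep K sm st V vsm ip p \<longleftrightarrow> pre_hilbert K V vsm ip \<and>
     (\<forall>a. \<forall>x\<in>V. p a x \<in> V) \<and>
     (\<forall>a. \<forall>x\<in>V. \<forall>y\<in>V. p a (x + y) = p a x + p a y) \<and>
     (\<forall>a. \<forall>c\<in>K. \<forall>x\<in>V. p a (vsm c x) = vsm c (p a x)) \<and>
     (\<forall>x\<in>V. p 1 x = x) \<and>
     (\<forall>a b. \<forall>x\<in>V. p (a + b) x = p a x + p b x) \<and>
     (\<forall>a. \<forall>c\<in>K. \<forall>x\<in>V. p (sm c a) x = vsm c (p a x)) \<and>
     (\<forall>a b. \<forall>x\<in>V. p (a * b) x = p a (p b x)) \<and>
     (\<forall>a. \<forall>x\<in>V. \<forall>y\<in>V. ip (p a x) y = ip x (p (st a) y))"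

definition I_left :: "('a \<Rightarrow> 'v \<Rightarrow> 'v::zero) \<Rightarrow> 'v \<Rightarrow> 'a set" where
  "I_left p v = {a. p a v = 0}"

definition ker_rep :: "'v::zero set \<Rightarrow> ('a \<Rightarrow> 'v \<Rightarrow> 'v) \<Rightarrow> 'a set" where
  "ker_rep V p = {a. \<forall>x\<in>V. p a x = 0}"

end

theory Submission
  imports Defs "HOL-Analysis.Analysis"
begin

text \<open>
  If v is a cyclic vector of a finite-dimensional star-representation, the annihilator of v is a
  real left ideal of finite codimension: from st a_1 a_1 + ... + st a_n a_n = x + st y with
  x v = y v = 0, pairing with v gives the sum of the squared norms of the a_j v, which is 0.

  Conversely, let I be real of finite codimension. It suffices to find a real functional g with
  g = g o st, vanishing on I + I* and with g (st a * a) > 0 for a outside I: then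
  (x, y) \<mapsto> g (st y * x), complexified if necessary, is an inner product on A/I, on which A acts by
  left multiplication, and the class of 1 is a cyclic vector with annihilator I. In the finite
  dimensional real space A/(I + I*) reality says that no sum of classes of hermitian squares of
  elements outside I vanishes, i.e. 0 lies outside the compact convex set of images of trace-one
  positive semidefinite Gram matrices. The point of least norm of this set defines g.

  The statements about two-sided ideals only use that every vector is of the form p b v.
\<close>

section \<open>Positive semidefinite matrices\<close>

definition quad_form :: "'i set \<Rightarrow> ('i \<Rightarrow> 'i \<Rightarrow> real) \<Rightarrow> ('i \<Rightarrow> real) \<Rightarrow> real" where
  "quad_form D X x = (\<Sum>k\<in>D. \<Sum>l\<in>D. x k * X k l * x l)"

definition psd_on :: "'i set \<Rightarrow> ('i \<Rightarrow> 'i \<Rightarrow> real) \<Rightarrow> bool" where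
  "psd_on D X \<longleftrightarrow> (\<forall>x. quad_form D X x \<ge> 0)"

definition symmetric_on :: "'i set \<Rightarrow> ('i \<Rightarrow> 'i \<Rightarrow> real) \<Rightarrow> bool" where
  "symmetric_on D X \<longleftrightarrow> (\<forall>k\<in>D. \<forall>l\<in>D. X k l = X l k)"

lemma sum_if_eq_mult_left:
  "finite D \<Longrightarrow> a \<in> D \<Longrightarrow> (\<Sum>k\<in>D. (if k = a then t else 0) * f k) = t * (f a :: real)"
  by (simp add: if_distrib[of "\<lambda>u. u * _"] sum.delta cong: if_cong)

lemma sum_if_eq_mult_right:
  "finite D \<Longrightarrow> a \<in> D \<Longrightarrow> (\<Sum>k\<in>D. f k * (if k = a then t else 0)) = f a * (t :: real)"
  using sum_if_eq_mult_left[of D a t f] by (simp add: mult.commute)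

lemma quad_form_update:
  assumes "finite D" "a \<in> D"
  shows "quad_form D X (x(a := x a + t)) = quad_form D X x + t * (\<Sum>l\<in>D. X a l * x l)
           + t * (\<Sum>k\<in>D. x k * X k a) + t\<^sup>2 * X a a"
proof -
  define d where "d = (\<lambda>k. if k = a then t else (0::real))"
  have upd: "x(a := x a + t) = (\<lambda>k. x k + d k)" by (auto simp: d_def)
  have row: "\<And>k. (\<Sum>l\<in>D. X k l * d l) = X k a * t"
    using assms unfolding d_def by (simp add: sum_if_eq_mult_right)
  have col: "\<And>g. (\<Sum>k\<in>D. d k * g k) = t * g a"
    using assms unfolding d_def by (simp add: sum_if_eq_mult_left)
  have "quad_form D X (\<lambda>k. x k + d k) = quad_form D X x + (\<Sum>k\<in>D. d k * (\<Sum>l\<in>D. X k l * x l))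
      + (\<Sum>k\<in>D. x k * (\<Sum>l\<in>D. X k l * d l)) + (\<Sum>k\<in>D. d k * (\<Sum>l\<in>D. X k l * d l))"
    unfolding quad_form_def by (simp add: algebra_simps sum.distrib sum_distrib_left)
  then show ?thesis
    unfolding upd row col by (simp add: sum_distrib_left power2_eq_square algebra_simps)
qed

lemma quad_form_indicator:
  "finite D \<Longrightarrow> l \<in> D \<Longrightarrow> quad_form D X (\<lambda>k. if k = l then 1 else 0) = X l l"
  unfolding quad_form_def by (simp add: sum_if_eq_mult_left sum_if_eq_mult_right)

lemma psd_on_diag_nonneg: "finite D \<Longrightarrow> psd_on D X \<Longrightarrow> l \<in> D \<Longrightarrow> X l l \<ge> 0"
  by (metis psd_on_def quad_form_indicator)

lemma quad_form_two_points:
  assumes "finite D" "symmetric_on D X" "a \<in> D" "l \<in> D" "a \<noteq> l"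
  shows "quad_form D X ((\<lambda>k. if k = l then 1 else 0)(a := t)) = X l l + 2 * t * X a l + t\<^sup>2 * X a a"
proof -
  let ?x = "\<lambda>k. if k = l then 1 else (0::real)"
  have "?x(a := t) = ?x(a := ?x a + t)" using assms(5) by simp
  moreover have "(\<Sum>k\<in>D. ?x k * X k a) = X a l" "(\<Sum>k\<in>D. X a k * ?x k) = X a l"
    using assms unfolding symmetric_on_def by (simp_all add: sum_if_eq_mult_left sum_if_eq_mult_right)
  ultimately show ?thesis
    using quad_form_update[OF assms(1,3), of X ?x t] quad_form_indicator[OF assms(1,4), of X] by simp
qed

lemma psd_on_zero_diag:
  assumes "finite D" "psd_on D X" "symmetric_on D X" "a \<in> D" "l \<in> D" "X a a = 0"
  shows "X a l = 0"
proof (rule ccontr)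
  assume ne: "X a l \<noteq> 0"
  then have "a \<noteq> l" using assms(6) by auto
  define t where "t = - (X l l + 1) / (2 * X a l)"
  have "0 \<le> X l l + 2 * t * X a l + t\<^sup>2 * X a a"
    using assms(2) quad_form_two_points[OF assms(1,3,4,5) \<open>a \<noteq> l\<close>] unfolding psd_on_def by metis
  also have "\<dots> = -1" using ne assms(6) by (simp add: t_def field_simps)
  finally show False by simp
qed

lemma psd_on_subset:
  assumes "finite D'" "D \<subseteq> D'" "psd_on D' X"
  shows "psd_on D X"
  unfolding psd_on_def
proof
  fix x
  define y where "y = (\<lambda>k. if k \<in> D then x k else (0::real))"
  have "quad_form D X x = (\<Sum>k\<in>D. \<Sum>l\<in>D. y k * X k l * y l)"
    unfolding quad_form_def y_def by simp
  also have "\<dots> = (\<Sum>k\<in>D. \<Sum>l\<in>D'. y k * X k l * y l)"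
    using assms(1,2) by (intro sum.cong refl sum.mono_neutral_left) (auto simp: y_def)
  also have "\<dots> = quad_form D' X y"
    unfolding quad_form_def using assms(1,2) by (intro sum.mono_neutral_left) (auto simp: y_def)
  finally show "quad_form D X x \<ge> 0" using assms(3) unfolding psd_on_def by metis
qed

text \<open>Completing the square in the coordinate a (a Schur complement).\<close>

lemma psd_on_schur_complement:
  assumes "finite D" "psd_on D X" "symmetric_on D X" "a \<in> D" "X a a > 0"
  shows "psd_on D (\<lambda>k l. X k l - X k a * X l a / X a a)"
  unfolding psd_on_def
proof
  fix x
  define s where "s = (\<Sum>l\<in>D. X a l * x l)"
  have col: "(\<Sum>k\<in>D. x k * X k a) = s"
    using assms(3,4) unfolding s_def symmetric_on_def by (auto intro!: sum.cong simp: mult.commute)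
  have "(\<Sum>k\<in>D. x k * X k a) * (\<Sum>l\<in>D. x l * X l a) / X a a
      = (\<Sum>k\<in>D. \<Sum>l\<in>D. x k * (X k a * X l a / X a a) * x l)"
    by (simp add: sum_product sum_divide_distrib algebra_simps)
  then have "quad_form D (\<lambda>k l. X k l - X k a * X l a / X a a) x = quad_form D X x - s * s / X a a"
    unfolding quad_form_def col by (simp add: sum_subtractf algebra_simps)
  also have "\<dots> = quad_form D X x + (- s / X a a) * s + (- s / X a a) * s + (- s / X a a)\<^sup>2 * X a a"
    using assms(5) by (simp add: power2_eq_square field_simps)
  also have "\<dots> = quad_form D X (x(a := x a + (- s / X a a)))"
    using quad_form_update[OF assms(1,4), of X x "- s / X a a"] unfolding col s_def[symmetric] by simp
  also have "\<dots> \<ge> 0" using assms(2) unfolding psd_on_def by blast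
  finally show "quad_form D (\<lambda>k l. X k l - X k a * X l a / X a a) x \<ge> 0" .
qed

text \<open>Induction step: subtracting the rank-one part u u' (u = column a scaled by the inverse
  square root of X a a, or 0 if X a a = 0) leaves a positive semidefinite matrix whose row a vanishes.\<close>

lemma psd_on_gram:
  assumes "finite D" "psd_on D X" "symmetric_on D X"
  shows "\<exists>(n::nat) cs. \<forall>k\<in>D. \<forall>l\<in>D. X k l = (\<Sum>j<n. cs j k * cs j l)"
  using assms
proof (induction D arbitrary: X rule: finite_induct)
  case empty
  then show ?case by auto
next
  case (insert a D)
  let ?D = "insert a D"
  have fin: "finite ?D" and aD: "a \<in> ?D" using insert by auto
  have sym: "\<And>k l. k \<in> ?D \<Longrightarrow> l \<in> ?D \<Longrightarrow> X k l = X l k"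
    using insert.prems(2) unfolding symmetric_on_def by blast
  define u where "u = (\<lambda>k. if X a a = 0 then 0 else X k a / sqrt (X a a))"
  define Y where "Y = (\<lambda>k l. X k l - u k * u l)"
  have uu: "u k * u l = (if X a a = 0 then 0 else X k a * X l a / X a a)" for k l
    using psd_on_diag_nonneg[OF fin insert.prems(1) aD] by (simp add: u_def)
  have Y_row: "Y a l = 0" and Y_col: "Y l a = 0" if "l \<in> ?D" for l
    using psd_on_zero_diag[OF fin insert.prems aD that] sym[OF that aD] by (auto simp: Y_def uu)
  have "psd_on ?D Y"
  proof (cases "X a a = 0")
    case True
    then show ?thesis using insert.prems(1) by (simp add: Y_def u_def)
  next
    case False
    then have "X a a > 0" using psd_on_diag_nonneg[OF fin insert.prems(1) aD] by simp
    moreover have "Y = (\<lambda>k l. X k l - X k a * X l a / X a a)"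
      using False by (simp add: Y_def uu)
    ultimately show ?thesis using psd_on_schur_complement[OF fin insert.prems aD] by simp
  qed
  then have "psd_on D Y" using psd_on_subset[OF fin] by blast
  moreover have "symmetric_on D Y" using sym by (auto simp: symmetric_on_def Y_def)
  ultimately obtain n :: nat and cs where cs: "\<forall>k\<in>D. \<forall>l\<in>D. Y k l = (\<Sum>j<n. cs j k * cs j l)"
    using insert.IH by blast
  define cs' where "cs' = (\<lambda>j. if j < n then (cs j)(a := 0) else u)"
  have "X k l = (\<Sum>j<Suc n. cs' j k * cs' j l)" if "k \<in> ?D" "l \<in> ?D" for k l
  proof -
    have "(\<Sum>j<Suc n. cs' j k * cs' j l) = (\<Sum>j<n. ((cs j)(a := 0)) k * ((cs j)(a := 0)) l) + u k * u l"
      by (simp add: cs'_def)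
    also have "(\<Sum>j<n. ((cs j)(a := 0)) k * ((cs j)(a := 0)) l) = Y k l"
      using that cs insert.hyps(2) Y_row Y_col by (cases "k = a \<or> l = a") auto
    finally show ?thesis by (simp add: Y_def)
  qed
  then show ?case by blast
qed

lemma psd_on_entry_bound:
  assumes "finite D" "psd_on D X" "symmetric_on D X" "(\<Sum>k\<in>D. X k k) = 1" "k \<in> D" "l \<in> D"
  shows "\<bar>X k l\<bar> \<le> 1"
proof -
  have diag: "0 \<le> X m m \<and> X m m \<le> 1" if "m \<in> D" for m
    using that member_le_sum[of m D "\<lambda>m. X m m"] psd_on_diag_nonneg[OF assms(1,2)] assms(1,4)
    by auto
  show ?thesis
  proof (cases "k = l")
    case False
    have "0 \<le> X k k + 2 * t * X l k + t\<^sup>2 * X l l" for t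
      using assms(2) quad_form_two_points[OF assms(1,3,6,5)] False unfolding psd_on_def by metis
    from this[of 1] this[of "-1"] show ?thesis
      using diag[OF assms(5)] diag[OF assms(6)] assms(3,5,6)
      by (simp add: abs_le_iff symmetric_on_def)
  qed (use diag[OF assms(5)] in simp)
qed

lemma psd_on_rank_one: "psd_on D (\<lambda>k l. u k * u l)"
proof -
  have "quad_form D (\<lambda>k l. u k * u l) x = (\<Sum>k\<in>D. x k * u k)\<^sup>2" for x
    unfolding quad_form_def power2_eq_square sum_product by (simp add: algebra_simps)
  then show ?thesis unfolding psd_on_def by simp
qed

lemma psd_on_convex:
  assumes "psd_on D X" "psd_on D Y" "0 \<le> t" "t \<le> 1"
  shows "psd_on D (\<lambda>k l. (1 - t) * X k l + t * Y k l)"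
proof -
  have "quad_form D (\<lambda>k l. (1 - t) * X k l + t * Y k l) x = (1 - t) * quad_form D X x + t * quad_form D Y x" for x
  proof -
    have "x k * ((1 - t) * X k l + t * Y k l) * x l = (1 - t) * (x k * X k l * x l) + t * (x k * Y k l * x l)"
      for k l by algebra
    then show ?thesis unfolding quad_form_def by (simp only: sum.distrib sum_distrib_left[symmetric])
  qed
  then show ?thesis using assms unfolding psd_on_def by simp
qed

section \<open>Separation by a point of least norm\<close>

definition density_matrices :: "'i set \<Rightarrow> ('i \<Rightarrow> 'i \<Rightarrow> real) set" where
  "density_matrices D = {X. psd_on D X \<and> symmetric_on D X \<and> (\<Sum>k\<in>D. X k k) = 1}"

definition contract :: "'i set \<Rightarrow> ('i \<Rightarrow> 'i \<Rightarrow> 'j \<Rightarrow> real) \<Rightarrow> ('i \<Rightarrow> 'i \<Rightarrow> real) \<Rightarrow> 'j \<Rightarrow> real" where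
  "contract D \<beta> X e = (\<Sum>k\<in>D. \<Sum>l\<in>D. X k l * \<beta> k l e)"

lemma contract_convex:
  "contract D \<beta> (\<lambda>k l. (1 - t) * X k l + t * Y k l) e = (1 - t) * contract D \<beta> X e + t * contract D \<beta> Y e"
proof -
  have "((1 - t) * X k l + t * Y k l) * \<beta> k l e = (1 - t) * (X k l * \<beta> k l e) + t * (Y k l * \<beta> k l e)"
    for k l by algebra
  then show ?thesis unfolding contract_def by (simp only: sum.distrib sum_distrib_left[symmetric])
qed

lemma contract_gram:
  assumes "\<forall>k\<in>D. \<forall>l\<in>D. X k l = (\<Sum>j<(n::nat). cs j k * cs j l)"
  shows "contract D \<beta> X e = (\<Sum>j<n. contract D \<beta> (\<lambda>k l. cs j k * cs j l) e)"
proof -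
  have "contract D \<beta> X e = (\<Sum>k\<in>D. \<Sum>l\<in>D. \<Sum>j<n. cs j k * cs j l * \<beta> k l e)"
    unfolding contract_def using assms by (auto intro!: sum.cong simp: sum_distrib_right)
  also have "\<dots> = (\<Sum>k\<in>D. \<Sum>j<n. \<Sum>l\<in>D. cs j k * cs j l * \<beta> k l e)"
    by (rule sum.cong[OF refl], rule sum.swap)
  also have "\<dots> = (\<Sum>j<n. \<Sum>k\<in>D. \<Sum>l\<in>D. cs j k * cs j l * \<beta> k l e)"
    by (rule sum.swap)
  finally show ?thesis unfolding contract_def .
qed

lemma density_matrices_convex:
  assumes "X \<in> density_matrices D" "Y \<in> density_matrices D" "0 \<le> t" "t \<le> 1"
  shows "(\<lambda>k l. (1 - t) * X k l + t * Y k l) \<in> density_matrices D"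
  using assms psd_on_convex[of D X Y t]
  by (auto simp: density_matrices_def symmetric_on_def sum.distrib sum_distrib_left[symmetric])

lemma rank_one_density_matrix:
  assumes "finite D" "k0 \<in> D" "c k0 \<noteq> 0"
  shows "(\<lambda>k l. c k * c l / (\<Sum>m\<in>D. (c m)\<^sup>2)) \<in> density_matrices D"
proof -
  define s where "s = (\<Sum>m\<in>D. (c m)\<^sup>2)"
  have "s > 0" unfolding s_def using assms by (intro sum_pos2) auto
  then have "(\<lambda>k l. c k * c l / s) = (\<lambda>k l. (c k / sqrt s) * (c l / sqrt s))"
    by (simp add: real_sqrt_mult[symmetric])
  then have "psd_on D (\<lambda>k l. c k * c l / s)" using psd_on_rank_one by metis
  moreover have "(\<Sum>k\<in>D. c k * c k / s) = 1"
    using \<open>s > 0\<close> by (simp add: s_def sum_divide_distrib[symmetric] power2_eq_square)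
  ultimately show ?thesis by (auto simp: density_matrices_def symmetric_on_def s_def mult.commute)
qed

lemma density_matrices_limit:
  fixes f :: "nat \<Rightarrow> 'i \<Rightarrow> 'i \<Rightarrow> real"
  assumes "\<And>n. f n \<in> density_matrices D"
    and lim: "\<And>k l. k \<in> D \<Longrightarrow> l \<in> D \<Longrightarrow> (\<lambda>n. f n k l) \<longlonglongrightarrow> L k l"
  shows "L \<in> density_matrices D"
proof -
  have "psd_on D L" unfolding psd_on_def
  proof
    fix x
    have "(\<lambda>n. quad_form D (f n) x) \<longlonglongrightarrow> quad_form D L x"
      unfolding quad_form_def by (intro tendsto_intros lim) auto
    then show "0 \<le> quad_form D L x"
      by (rule LIMSEQ_le_const) (use assms(1) in \<open>auto simp: density_matrices_def psd_on_def\<close>)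
  qed
  moreover have "symmetric_on D L" unfolding symmetric_on_def
  proof (intro ballI)
    fix k l assume "k \<in> D" "l \<in> D"
    then have "(\<lambda>n. f n k l) = (\<lambda>n. f n l k)"
      using assms(1) unfolding density_matrices_def symmetric_on_def by blast
    then show "L k l = L l k" using lim \<open>k \<in> D\<close> \<open>l \<in> D\<close> LIMSEQ_unique by metis
  qed
  moreover have "(\<Sum>k\<in>D. L k k) = 1"
  proof -
    have "(\<lambda>n. \<Sum>k\<in>D. f n k k) \<longlonglongrightarrow> (\<Sum>k\<in>D. L k k)" by (intro tendsto_intros lim)
    moreover have "(\<lambda>n. \<Sum>k\<in>D. f n k k) = (\<lambda>n. 1)"
      using assms(1) unfolding density_matrices_def by blast
    ultimately show ?thesis using LIMSEQ_unique tendsto_const by metis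
  qed
  ultimately show ?thesis unfolding density_matrices_def by blast
qed

lemma density_matrices_subseq_limit:
  fixes f :: "nat \<Rightarrow> 'i \<Rightarrow> 'i \<Rightarrow> real"
  assumes "finite D" "\<And>n. f n \<in> density_matrices D"
  shows "\<exists>r L. strict_mono r \<and> L \<in> density_matrices D \<and>
           (\<forall>k\<in>D. \<forall>l\<in>D. (\<lambda>n. f (r n) k l) \<longlonglongrightarrow> L k l)"
proof -
  have bnd: "bounded ((\<lambda>X. X (fst kl) (snd kl)) ` range f)" if "kl \<in> D \<times> D" for kl
    unfolding bounded_iff
    by (rule exI[of _ 1]) (use that assms in \<open>auto simp: density_matrices_def intro: psd_on_entry_bound\<close>)
  have "\<forall>\<delta>\<subseteq>D \<times> D. \<exists>L::'i \<Rightarrow> 'i \<Rightarrow> real. \<exists>r::nat \<Rightarrow> nat. strict_mono r \<and>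
      (\<forall>\<epsilon>>0. \<forall>\<^sub>F n in sequentially. \<forall>i\<in>\<delta>.
        dist ((\<lambda>X kl. X (fst kl) (snd kl)) (f (r n)) i) ((\<lambda>X kl. X (fst kl) (snd kl)) L i) < \<epsilon>)"
  proof (rule compact_lemma_general[where unproj = "\<lambda>g k l. g (k, l)"])
    show "finite (D \<times> D)" using assms(1) by simp
  qed (use bnd in auto)
  then obtain L :: "'i \<Rightarrow> 'i \<Rightarrow> real" and r where r: "strict_mono r"
    and conv: "\<forall>\<epsilon>>0. \<forall>\<^sub>F n in sequentially. \<forall>i\<in>D \<times> D. dist (f (r n) (fst i) (snd i)) (L (fst i) (snd i)) < \<epsilon>"
    by blast
  have lim: "(\<lambda>n. f (r n) k l) \<longlonglongrightarrow> L k l" if "k \<in> D" "l \<in> D" for k l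
    unfolding tendsto_iff using that by (force elim!: eventually_mono dest: conv[rule_format])
  then have "\<forall>k\<in>D. \<forall>l\<in>D. (\<lambda>n. f (r n) k l) \<longlonglongrightarrow> L k l" by blast
  moreover have "L \<in> density_matrices D"
    using density_matrices_limit[of "\<lambda>n. f (r n)"] assms(2) lim by blast
  ultimately show ?thesis using r by blast
qed

lemma density_matrices_min_contract:
  assumes "finite D" "D \<noteq> {}"
  shows "\<exists>L\<in>density_matrices D. \<forall>Y\<in>density_matrices D.
           (\<Sum>e\<in>E. (contract D \<beta> L e)\<^sup>2) \<le> (\<Sum>e\<in>E. (contract D \<beta> Y e)\<^sup>2)"
proof -
  define val where "val = (\<lambda>X. \<Sum>e\<in>E. (contract D \<beta> X e)\<^sup>2)"
  obtain d0 where "d0 \<in> D" using assms(2) by blast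
  then have "density_matrices D \<noteq> {}"
    using rank_one_density_matrix[of D d0 "\<lambda>_. 1", OF assms(1)] by force
  then have ne: "val ` density_matrices D \<noteq> {}" by simp
  have bdd: "bdd_below (val ` density_matrices D)"
    unfolding val_def by (rule bdd_belowI[of _ 0]) (auto intro: sum_nonneg)
  define m where "m = Inf (val ` density_matrices D)"
  have "\<exists>X\<in>density_matrices D. val X < m + inverse (real (Suc n))" for n
    using cInf_lessD[OF ne, of "m + inverse (real (Suc n))"] unfolding m_def by auto
  then obtain f where f: "\<And>n. f n \<in> density_matrices D"
    and fv: "\<And>n. val (f n) < m + inverse (real (Suc n))" by metis
  obtain r L where r: "strict_mono r" and L: "L \<in> density_matrices D"
    and lim: "\<And>k l. k \<in> D \<Longrightarrow> l \<in> D \<Longrightarrow> (\<lambda>n. f (r n) k l) \<longlonglongrightarrow> L k l"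
    using density_matrices_subseq_limit[of D f, OF assms(1) f] by blast
  have lim_val: "(\<lambda>n. val (f (r n))) \<longlonglongrightarrow> val L"
    unfolding val_def contract_def by (intro tendsto_intros lim)
  have min: "val L \<le> val Y" if Y: "Y \<in> density_matrices D" for Y
  proof -
    have "m \<le> val Y" unfolding m_def using Y bdd by (auto intro: cInf_lower)
    moreover have "inverse (real (Suc (r n))) \<le> inverse (real (Suc n))" for n
      using seq_suble[OF r, of n] by (simp add: le_imp_inverse_le)
    ultimately have "val (f (r n)) \<le> val Y + inverse (real (Suc n))" for n
      using fv[of "r n"] by (smt (verit))
    moreover have "(\<lambda>n. val Y + inverse (real (Suc n))) \<longlonglongrightarrow> val Y + 0"
      by (intro tendsto_intros LIMSEQ_inverse_real_of_nat)
    ultimately show "val L \<le> val Y" using LIMSEQ_le[OF lim_val] by fastforce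
  qed
  show ?thesis using L min[unfolded val_def] by blast
qed

text \<open>The variational inequality for a point of least Euclidean norm in a convex set.\<close>

lemma sum_squares_min_convex:
  fixes y z :: "'j \<Rightarrow> real"
  assumes "\<And>t. 0 < t \<Longrightarrow> t \<le> 1 \<Longrightarrow> (\<Sum>e\<in>E. (y e)\<^sup>2) \<le> (\<Sum>e\<in>E. ((1 - t) * y e + t * z e)\<^sup>2)"
  shows "(\<Sum>e\<in>E. (y e)\<^sup>2) \<le> (\<Sum>e\<in>E. y e * z e)"
proof -
  define a where "a = 2 * (\<Sum>e\<in>E. y e * (z e - y e))"
  define b where "b = (\<Sum>e\<in>E. (z e - y e)\<^sup>2)"
  have expand: "(\<Sum>e\<in>E. ((1 - t) * y e + t * z e)\<^sup>2) = (\<Sum>e\<in>E. (y e)\<^sup>2) + t * (a + t * b)" for t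
  proof -
    have "((1 - t) * y e + t * z e)\<^sup>2 = (y e)\<^sup>2 + t * (2 * (y e * (z e - y e))) + t * (t * (z e - y e)\<^sup>2)"
      for e by algebra
    then show ?thesis unfolding a_def b_def by (simp add: sum.distrib sum_distrib_left distrib_left)
  qed
  have "0 \<le> a + t * b" if "0 < t" "t \<le> 1" for t
  proof -
    have "0 \<le> t * (a + t * b)" using assms[OF that] expand[of t] by linarith
    then show ?thesis using that by (simp add: zero_le_mult_iff)
  qed
  then have "0 \<le> a + inverse (real (Suc n)) * b" for n by (simp add: inverse_le_1_iff)
  moreover have "(\<lambda>n. a + inverse (real (Suc n)) * b) \<longlonglongrightarrow> a + 0 * b"
    by (intro tendsto_intros LIMSEQ_inverse_real_of_nat)
  ultimately have "0 \<le> a" using LIMSEQ_le_const by fastforce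
  moreover have "(\<Sum>e\<in>E. y e * (z e - y e)) = (\<Sum>e\<in>E. y e * z e) - (\<Sum>e\<in>E. (y e)\<^sup>2)"
    by (simp add: right_diff_distrib sum_subtractf power2_eq_square)
  ultimately show ?thesis unfolding a_def by simp
qed

text \<open>If no nontrivial sum of rank-one matrices c c' is mapped to 0, the point of least norm in the
  compact convex image of the density matrices is a functional positive on all of them.\<close>

lemma density_matrix_contract_nonzero:
  assumes "finite D" "L \<in> density_matrices D"
    and nondeg: "\<And>(n::nat) cs. (\<forall>e\<in>E. (\<Sum>j<n. contract D \<beta> (\<lambda>k l. cs j k * cs j l) e) = 0)
                   \<Longrightarrow> \<forall>j<n. \<forall>k\<in>D. cs j k = 0"
  shows "\<exists>e\<in>E. contract D \<beta> L e \<noteq> 0"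
proof (rule ccontr)
  assume "\<not> (\<exists>e\<in>E. contract D \<beta> L e \<noteq> 0)"
  obtain n :: nat and cs where cs: "\<forall>k\<in>D. \<forall>l\<in>D. L k l = (\<Sum>j<n. cs j k * cs j l)"
    using psd_on_gram[OF assms(1)] assms(2) unfolding density_matrices_def by blast
  then have "\<forall>e\<in>E. (\<Sum>j<n. contract D \<beta> (\<lambda>k l. cs j k * cs j l) e) = 0"
    using \<open>\<not> (\<exists>e\<in>E. contract D \<beta> L e \<noteq> 0)\<close> contract_gram[OF cs, of \<beta>] by simp
  then have "\<forall>j<n. \<forall>k\<in>D. cs j k = 0" by (rule nondeg)
  then have "(\<Sum>k\<in>D. L k k) = 0" using cs by simp
  then show False using assms(2) unfolding density_matrices_def by simp
qed

lemma contract_positive_functional: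
  assumes "finite D" "finite E"
    and nondeg: "\<And>(n::nat) cs. (\<forall>e\<in>E. (\<Sum>j<n. contract D \<beta> (\<lambda>k l. cs j k * cs j l) e) = 0)
                   \<Longrightarrow> \<forall>j<n. \<forall>k\<in>D. cs j k = 0"
  shows "\<exists>y. \<forall>c. (\<exists>k\<in>D. c k \<noteq> 0) \<longrightarrow> (\<Sum>e\<in>E. y e * contract D \<beta> (\<lambda>k l. c k * c l) e) > 0"
proof (cases "D = {}")
  case False
  obtain L where L: "L \<in> density_matrices D"
    and min: "\<And>Y. Y \<in> density_matrices D \<Longrightarrow>
                (\<Sum>e\<in>E. (contract D \<beta> L e)\<^sup>2) \<le> (\<Sum>e\<in>E. (contract D \<beta> Y e)\<^sup>2)"
    using density_matrices_min_contract[OF assms(1) False] by blast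
  define y where "y = contract D \<beta> L"
  have "\<exists>e\<in>E. y e \<noteq> 0"
    unfolding y_def by (rule density_matrix_contract_nonzero[OF assms(1) L nondeg])
  then have pos: "(\<Sum>e\<in>E. (y e)\<^sup>2) > 0" using assms(2) by (auto intro: sum_pos2)
  have ineq: "(\<Sum>e\<in>E. (y e)\<^sup>2) \<le> (\<Sum>e\<in>E. y e * contract D \<beta> C e)" if C: "C \<in> density_matrices D" for C
  proof (rule sum_squares_min_convex)
    fix t :: real assume "0 < t" "t \<le> 1"
    then show "(\<Sum>e\<in>E. (y e)\<^sup>2) \<le> (\<Sum>e\<in>E. ((1 - t) * y e + t * contract D \<beta> C e)\<^sup>2)"
      using min[OF density_matrices_convex[OF L C, of t]] unfolding y_def contract_convex by simp
  qed
  have "(\<Sum>e\<in>E. y e * contract D \<beta> (\<lambda>k l. c k * c l) e) > 0" if "k0 \<in> D" "c k0 \<noteq> 0" for c k0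
  proof -
    define s where "s = (\<Sum>m\<in>D. (c m)\<^sup>2)"
    have "s > 0" unfolding s_def using assms(1) that by (intro sum_pos2) auto
    have "0 < (\<Sum>e\<in>E. y e * contract D \<beta> (\<lambda>k l. c k * c l / s) e)"
      using pos ineq[OF rank_one_density_matrix[of D k0 c, OF assms(1) that]] unfolding s_def by linarith
    also have "\<dots> = (\<Sum>e\<in>E. y e * (contract D \<beta> (\<lambda>k l. c k * c l) e / s))"
      unfolding contract_def by (simp add: sum_divide_distrib)
    also have "\<dots> = (\<Sum>e\<in>E. y e * contract D \<beta> (\<lambda>k l. c k * c l) e) / s"
      by (simp add: sum_divide_distrib)
    finally show ?thesis using \<open>s > 0\<close> by (simp add: zero_less_divide_iff)
  qed
  then show ?thesis by blast
qed simp

section \<open>Star-algebras as real vector spaces\<close>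

locale star_alg =
  fixes K :: "complex set" and sm :: "complex \<Rightarrow> 'a::ring_1 \<Rightarrow> 'a" and st :: "'a \<Rightarrow> 'a"
  assumes star_algebra: "star_algebra K sm st"
begin

lemma K_cases: "K = \<real> \<or> K = UNIV"
  using star_algebra unfolding star_algebra_def scalar_field_def by blast

lemma of_real_in_K: "complex_of_real r \<in> K"
  using K_cases by auto

lemma sm_add: "c \<in> K \<Longrightarrow> sm c (a + b) = sm c a + sm c b"
  and sm_add_scalar: "c \<in> K \<Longrightarrow> d \<in> K \<Longrightarrow> sm (c + d) a = sm c a + sm d a"
  and sm_mult_scalar: "c \<in> K \<Longrightarrow> d \<in> K \<Longrightarrow> sm (c * d) a = sm c (sm d a)"
  and sm_one: "sm 1 a = a"
  and sm_mul_left: "c \<in> K \<Longrightarrow> sm c (a * b) = sm c a * b"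
  and sm_mul_right: "c \<in> K \<Longrightarrow> sm c (a * b) = a * sm c b"
  and st_add: "st (a + b) = st a + st b"
  and st_sm: "c \<in> K \<Longrightarrow> st (sm c a) = sm (cnj c) (st a)"
  and st_mul: "st (a * b) = st b * st a"
  and st_st: "st (st a) = a"
  using star_algebra unfolding star_algebra_def by blast+

lemma sm_zero_scalar: "sm 0 a = 0"
  using sm_add_scalar[of 0 0 a] of_real_in_K[of 0] by simp

lemma sm_zero: "c \<in> K \<Longrightarrow> sm c 0 = 0"
  using sm_add[of c 0 0] by simp

lemma sm_neg_scalar: "c \<in> K \<Longrightarrow> sm (- c) a = - sm c a"
  using sm_add_scalar[of c "- c" a] sm_zero_scalar K_cases by (auto simp: add_eq_0_iff2)

lemma sm_diff: "c \<in> K \<Longrightarrow> sm c (a - b) = sm c a - sm c b"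
proof -
  assume c: "c \<in> K"
  have "sm c (a - b) + sm c b = sm c a" using sm_add[OF c, of "a - b" b] by simp
  then show ?thesis by (simp add: eq_diff_eq)
qed

lemma st_zero: "st 0 = 0"
  using st_add[of 0 0] by simp

lemma st_diff: "st (a - b) = st a - st b"
  using st_add[of "a - b" b] by (simp add: eq_diff_eq)

lemma st_neg: "st (- a) = - st a"
  using st_diff[of 0 a] st_zero by simp

lemma st_sum: "st (\<Sum>i\<in>A. f i) = (\<Sum>i\<in>A. st (f i))"
  by (induction A rule: infinite_finite_induct) (auto simp: st_zero st_add)

text \<open>Both choices of K contain the reals, and the construction works over the reals throughout.\<close>

definition rscale :: "real \<Rightarrow> 'a \<Rightarrow> 'a" where
  "rscale r a = sm (complex_of_real r) a"

lemma rscale_add: "rscale r (a + b) = rscale r a + rscale r b"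
  unfolding rscale_def using sm_add of_real_in_K by blast

lemma rscale_add_scalar: "rscale (r + s) a = rscale r a + rscale s a"
  unfolding rscale_def using sm_add_scalar of_real_in_K by (metis of_real_add)

lemma rscale_rscale: "rscale r (rscale s a) = rscale (r * s) a"
  unfolding rscale_def using sm_mult_scalar of_real_in_K by (metis of_real_mult)

lemma rscale_one: "rscale 1 a = a"
  unfolding rscale_def using sm_one by simp

lemma rscale_zero_scalar: "rscale 0 a = 0"
  unfolding rscale_def using sm_zero_scalar by simp

lemma rscale_zero: "rscale r 0 = 0"
  unfolding rscale_def using sm_zero of_real_in_K by blast

lemma rscale_diff: "rscale r (a - b) = rscale r a - rscale r b"
  unfolding rscale_def using sm_diff of_real_in_K by blast

lemma rscale_diff_scalar: "rscale (r - s) a = rscale r a - rscale s a"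
  using rscale_add_scalar[of "r - s" s a] by (simp add: eq_diff_eq)

lemma rscale_minus_one: "rscale (-1) a = - a"
proof -
  have "a + rscale (-1) a = 0" using rscale_add_scalar[of 1 "-1" a] rscale_zero_scalar rscale_one by simp
  then show ?thesis by (simp add: add_eq_0_iff)
qed

lemma rscale_mul_left: "rscale r (a * b) = rscale r a * b"
  and rscale_mul_right: "rscale r (a * b) = a * rscale r b"
  unfolding rscale_def using sm_mul_left sm_mul_right of_real_in_K by blast+

lemma st_rscale: "st (rscale r a) = rscale r (st a)"
  unfolding rscale_def using st_sm of_real_in_K by simp

lemma rscale_sum: "rscale r (\<Sum>i\<in>A. f i) = (\<Sum>i\<in>A. rscale r (f i))"
  by (induction A rule: infinite_finite_induct) (auto simp: rscale_add rscale_zero)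

lemma sm_eq_rscale_Re_Im: "c \<in> K \<Longrightarrow> sm c a = rscale (Re c) a + rscale (Im c) (sm \<i> a)"
proof -
  assume c: "c \<in> K"
  show ?thesis
  proof (cases "K = UNIV")
    case True
    have "c = complex_of_real (Re c) + complex_of_real (Im c) * \<i>" by (simp add: complex_eq_iff)
    then show ?thesis
      using True sm_add_scalar sm_mult_scalar unfolding rscale_def by (metis UNIV_I)
  next
    case False
    then have "c \<in> \<real>" using c K_cases by auto
    then have "c = complex_of_real (Re c)" "Im c = 0" by (auto simp: complex_is_Real_iff complex_eq_iff)
    then show ?thesis unfolding rscale_def using sm_zero_scalar by (metis add_0_right of_real_0)
  qed
qed

section \<open>Coordinates modulo a real subspace\<close>

definition real_subspace :: "'a set \<Rightarrow> bool" where
  "real_subspace X \<longleftrightarrow> 0 \<in> X \<and> (\<forall>x\<in>X. \<forall>y\<in>X. x + y \<in> X) \<and> (\<forall>r. \<forall>x\<in>X. rscale r x \<in> X)"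

definition lin_comb :: "'a set \<Rightarrow> ('a \<Rightarrow> real) \<Rightarrow> 'a" where
  "lin_comb B c = (\<Sum>b\<in>B. rscale (c b) b)"

definition spans_mod :: "'a set \<Rightarrow> 'a set \<Rightarrow> bool" where
  "spans_mod X B \<longleftrightarrow> (\<forall>a. \<exists>c. a - lin_comb B c \<in> X)"

definition indep_mod :: "'a set \<Rightarrow> 'a set \<Rightarrow> bool" where
  "indep_mod X B \<longleftrightarrow> (\<forall>c. lin_comb B c \<in> X \<longrightarrow> (\<forall>b\<in>B. c b = 0))"

definition coord_mod :: "'a set \<Rightarrow> 'a set \<Rightarrow> 'a \<Rightarrow> 'a \<Rightarrow> real" where
  "coord_mod X B x = (SOME c. x - lin_comb B c \<in> X)"

lemma real_subspace_zero: "real_subspace X \<Longrightarrow> 0 \<in> X"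
  and real_subspace_add: "real_subspace X \<Longrightarrow> x \<in> X \<Longrightarrow> y \<in> X \<Longrightarrow> x + y \<in> X"
  and real_subspace_rscale: "real_subspace X \<Longrightarrow> x \<in> X \<Longrightarrow> rscale r x \<in> X"
  unfolding real_subspace_def by blast+

lemma real_subspace_neg: "real_subspace X \<Longrightarrow> x \<in> X \<Longrightarrow> - x \<in> X"
  using real_subspace_rscale[of X x "-1"] rscale_minus_one by simp

lemma real_subspace_diff: "real_subspace X \<Longrightarrow> x \<in> X \<Longrightarrow> y \<in> X \<Longrightarrow> x - y \<in> X"
  using real_subspace_add[of X x "- y"] real_subspace_neg[of X y] by simp

lemma lin_comb_add: "lin_comb B (\<lambda>b. c b + d b) = lin_comb B c + lin_comb B d"
  unfolding lin_comb_def by (simp add: rscale_add_scalar sum.distrib)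

lemma lin_comb_scale: "lin_comb B (\<lambda>b. r * c b) = rscale r (lin_comb B c)"
  unfolding lin_comb_def by (simp add: rscale_sum rscale_rscale)

lemma lin_comb_diff: "lin_comb B (\<lambda>b. c b - d b) = lin_comb B c - lin_comb B d"
  unfolding lin_comb_def by (simp add: rscale_diff_scalar sum_subtractf)

lemma lin_comb_cong: "(\<And>b. b \<in> B \<Longrightarrow> c b = d b) \<Longrightarrow> lin_comb B c = lin_comb B d"
  unfolding lin_comb_def by (rule sum.cong) auto

lemma lin_comb_zero: "(\<And>b. b \<in> B \<Longrightarrow> c b = 0) \<Longrightarrow> lin_comb B c = 0"
  unfolding lin_comb_def by (simp add: rscale_zero_scalar)

lemma lin_comb_indicator:
  assumes "finite B" "b0 \<in> B"
  shows "lin_comb B (\<lambda>b. if b = b0 then r else 0) = rscale r b0"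
proof -
  have "lin_comb B (\<lambda>b. if b = b0 then r else 0) = (\<Sum>b\<in>B. if b = b0 then rscale r b0 else 0)"
    unfolding lin_comb_def by (rule sum.cong) (auto simp: rscale_zero_scalar)
  then show ?thesis using assms by simp
qed

lemma sum_rscale_eq_lin_comb:
  assumes "finite B" "finite S" "\<And>s. s \<in> S \<Longrightarrow> g s \<in> B"
  shows "\<exists>d. (\<Sum>s\<in>S. rscale (f s) (g s)) = lin_comb B d"
  using assms(2,3)
proof (induction S rule: finite_induct)
  case empty
  then show ?case using lin_comb_zero[of B "\<lambda>_. 0"] by auto
next
  case (insert s S)
  then obtain d where d: "(\<Sum>s\<in>S. rscale (f s) (g s)) = lin_comb B d" by blast
  have "(\<Sum>s\<in>insert s S. rscale (f s) (g s)) = lin_comb B (\<lambda>b. if b = g s then f s else 0) + lin_comb B d"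
    using insert d lin_comb_indicator[OF assms(1)] by simp
  then show ?case by (metis lin_comb_add)
qed

text \<open>A finite spanning set modulo X contains a basis modulo X: drop a vector with nonzero
  coefficient in a relation until none is left.\<close>

lemma spans_mod_basis:
  assumes "real_subspace X" "finite B" "spans_mod X B"
  shows "\<exists>B'\<subseteq>B. spans_mod X B' \<and> indep_mod X B'"
  using assms(2,3)
proof (induction "card B" arbitrary: B rule: less_induct)
  case less
  show ?case
  proof (cases "indep_mod X B")
    case False
    then obtain c b where cX: "lin_comb B c \<in> X" and b: "b \<in> B" and cb: "c b \<noteq> 0"
      unfolding indep_mod_def by blast
    have split: "lin_comb B d = rscale (d b) b + lin_comb (B - {b}) d" for d
      unfolding lin_comb_def using less.prems(1) b by (simp add: sum.remove)
    have "spans_mod X (B - {b})" unfolding spans_mod_def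
    proof
      fix a
      obtain d where d: "a - lin_comb B d \<in> X" using less.prems(2) unfolding spans_mod_def by blast
      define e where "e = (\<lambda>k. d k - (d b / c b) * c k)"
      have "a - lin_comb (B - {b}) e = (a - lin_comb B d) + rscale (d b / c b) (lin_comb B c)"
        unfolding e_def lin_comb_diff lin_comb_scale split[of d] split[of c] using cb
        by (simp add: rscale_add rscale_rscale algebra_simps)
      also have "\<dots> \<in> X" using cX d assms(1) by (simp add: real_subspace_add real_subspace_rscale)
      finally show "\<exists>e. a - lin_comb (B - {b}) e \<in> X" by blast
    qed
    moreover have "card (B - {b}) < card B" using less.prems(1) b by (rule card_Diff1_less)
    ultimately show ?thesis using less.hyps[of "B - {b}"] less.prems(1) by blast
  qed (use less in blast)
qed

context
  fixes X B
  assumes subspace: "real_subspace X" and spans: "spans_mod X B" and indep: "indep_mod X B"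
begin

lemma coord_mod_spec: "x - lin_comb B (coord_mod X B x) \<in> X"
  using spans unfolding coord_mod_def spans_mod_def by (metis (mono_tags) someI_ex)

lemma coord_mod_unique:
  assumes "x - lin_comb B c \<in> X" "b \<in> B"
  shows "coord_mod X B x b = c b"
proof -
  have "(x - lin_comb B c) - (x - lin_comb B (coord_mod X B x)) \<in> X"
    using real_subspace_diff[OF subspace assms(1) coord_mod_spec] .
  then have "lin_comb B (\<lambda>b. coord_mod X B x b - c b) \<in> X" by (simp add: lin_comb_diff)
  then show ?thesis using indep assms(2) unfolding indep_mod_def by fastforce
qed

lemma coord_mod_add: "b \<in> B \<Longrightarrow> coord_mod X B (x + y) b = coord_mod X B x b + coord_mod X B y b"
  by (rule coord_mod_unique)
    (use real_subspace_add[OF subspace coord_mod_spec[of x] coord_mod_spec[of y]] in \<open>simp add: lin_comb_add algebra_simps\<close>)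

lemma coord_mod_rscale: "b \<in> B \<Longrightarrow> coord_mod X B (rscale r x) b = r * coord_mod X B x b"
  by (rule coord_mod_unique)
    (use real_subspace_rscale[OF subspace coord_mod_spec[of x], of r] in \<open>simp add: lin_comb_scale rscale_diff\<close>)

lemma coord_mod_eq: "b \<in> B \<Longrightarrow> x - y \<in> X \<Longrightarrow> coord_mod X B x b = coord_mod X B y b"
  by (rule coord_mod_unique)
    (use real_subspace_add[OF subspace _ coord_mod_spec[of y], of "x - y"] in \<open>simp add: algebra_simps\<close>)

lemma coord_mod_in: "b \<in> B \<Longrightarrow> x \<in> X \<Longrightarrow> coord_mod X B x b = 0"
  using coord_mod_unique[of x "\<lambda>_. 0" b] lin_comb_zero[of B "\<lambda>_. 0"] by simp

lemma coord_mod_sum: "b \<in> B \<Longrightarrow> coord_mod X B (\<Sum>i\<in>A. f i) b = (\<Sum>i\<in>A. coord_mod X B (f i) b)"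
  by (induction A rule: infinite_finite_induct)
    (auto simp: coord_mod_add coord_mod_in real_subspace_zero[OF subspace])

end

end

section \<open>Real ideals and faithful functionals\<close>

context star_alg
begin

definition ideal_plus_star :: "'a set \<Rightarrow> 'a set" where
  "ideal_plus_star I = {x + st y | x y. x \<in> I \<and> y \<in> I}"

lemma left_ideal_sm: "left_ideal K sm I \<Longrightarrow> c \<in> K \<Longrightarrow> x \<in> I \<Longrightarrow> sm c x \<in> I"
  and left_ideal_mul: "left_ideal K sm I \<Longrightarrow> x \<in> I \<Longrightarrow> a * x \<in> I"
  unfolding left_ideal_def by blast+

lemma left_ideal_real_subspace: "left_ideal K sm I \<Longrightarrow> real_subspace I"
  unfolding real_subspace_def rscale_def using of_real_in_K unfolding left_ideal_def by blast

lemma real_subspace_ideal_plus_star: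
  assumes "left_ideal K sm I"
  shows "real_subspace (ideal_plus_star I)"
  unfolding real_subspace_def ideal_plus_star_def
proof (intro conjI ballI allI)
  note I = left_ideal_real_subspace[OF assms]
  show "0 \<in> {x + st y |x y. x \<in> I \<and> y \<in> I}" using real_subspace_zero[OF I] st_zero by force
  fix u v assume "u \<in> {x + st y |x y. x \<in> I \<and> y \<in> I}" "v \<in> {x + st y |x y. x \<in> I \<and> y \<in> I}"
  then obtain x y x' y' where "u = x + st y" "v = x' + st y'" "x \<in> I" "y \<in> I" "x' \<in> I" "y' \<in> I"
    by blast
  moreover have "u + v = (x + x') + st (y + y')" using calculation by (simp add: st_add algebra_simps)
  ultimately show "u + v \<in> {x + st y |x y. x \<in> I \<and> y \<in> I}" using real_subspace_add[OF I] by blast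
next
  note I = left_ideal_real_subspace[OF assms]
  fix r u assume "u \<in> {x + st y |x y. x \<in> I \<and> y \<in> I}"
  then obtain x y where "u = x + st y" "x \<in> I" "y \<in> I" by blast
  moreover have "rscale r u = rscale r x + st (rscale r y)"
    using calculation by (simp add: st_rscale rscale_add)
  ultimately show "rscale r u \<in> {x + st y |x y. x \<in> I \<and> y \<in> I}" using real_subspace_rscale[OF I] by blast
qed

lemma ideal_subset_plus_star: "left_ideal K sm I \<Longrightarrow> x \<in> I \<Longrightarrow> x \<in> ideal_plus_star I"
  unfolding ideal_plus_star_def using st_zero left_ideal_real_subspace real_subspace_zero by force

lemma st_mul_mem_plus_star: "left_ideal K sm I \<Longrightarrow> x \<in> I \<Longrightarrow> st x * a \<in> ideal_plus_star I"
  unfolding ideal_plus_star_def using left_ideal_mul[of I x "st a"] left_ideal_real_subspace real_subspace_zero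
  by (force simp: st_mul st_st)

lemma st_mem_plus_star: "x \<in> ideal_plus_star I \<Longrightarrow> st x \<in> ideal_plus_star I"
  unfolding ideal_plus_star_def by (force simp: st_add st_st add.commute)

lemma sm_i_mem_plus_star:
  assumes "K = UNIV" "left_ideal K sm I" "x \<in> ideal_plus_star I"
  shows "sm \<i> x \<in> ideal_plus_star I"
proof -
  obtain u v where "x = u + st v" "u \<in> I" "v \<in> I" using assms(3) unfolding ideal_plus_star_def by blast
  moreover have "sm \<i> (u + st v) = sm \<i> u + st (sm (- \<i>) v)" using assms(1) by (simp add: sm_add st_sm)
  ultimately show ?thesis
    using left_ideal_sm[OF assms(2)] assms(1) unfolding ideal_plus_star_def by fastforce
qed

lemma herm_square_diff_mem:
  assumes "left_ideal K sm I" "a - b \<in> I"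
  shows "st a * a - st b * b \<in> ideal_plus_star I"
proof -
  define x where "x = a - b"
  have "st a * a - st b * b = (st b * x + st x * x) + st x * b"
    unfolding x_def by (simp add: st_diff algebra_simps)
  moreover have "st b * x + st x * x \<in> I"
    using left_ideal_mul[OF assms(1)] assms(2) real_subspace_add[OF left_ideal_real_subspace[OF assms(1)]]
    unfolding x_def by blast
  ultimately show ?thesis
    using real_subspace_add[OF real_subspace_ideal_plus_star[OF assms(1)]] ideal_subset_plus_star[OF assms(1)]
      st_mul_mem_plus_star[OF assms(1) assms(2)[folded x_def]] by metis
qed

lemma st_lin_comb_mul:
  "st (lin_comb D c) * lin_comb D c = (\<Sum>k\<in>D. \<Sum>l\<in>D. rscale (c k * c l) (st k * l))"
proof -
  have "st (lin_comb D c) * lin_comb D c = (\<Sum>k\<in>D. \<Sum>l\<in>D. rscale (c k) (st k) * rscale (c l) l)"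
    unfolding lin_comb_def by (simp add: st_sum st_rscale sum_product)
  also have "\<dots> = (\<Sum>k\<in>D. \<Sum>l\<in>D. rscale (c k * c l) (st k * l))"
    by (intro sum.cong refl) (simp add: rscale_mul_left[symmetric] rscale_mul_right[symmetric] rscale_rscale mult.commute)
  finally show ?thesis .
qed

lemma finite_codim_spans_mod:
  assumes "finite_codim K sm I"
  shows "\<exists>S. finite S \<and> spans_mod I S"
proof -
  obtain S where S: "finite S" "\<forall>a. \<exists>c. (\<forall>s\<in>S. c s \<in> K) \<and> a - (\<Sum>s\<in>S. sm (c s) s) \<in> I"
    using assms unfolding finite_codim_def by blast
  define S' where "S' = S \<union> sm \<i> ` S"
  have "finite S'" unfolding S'_def using S(1) by simp
  moreover have "spans_mod I S'" unfolding spans_mod_def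
  proof
    fix a
    obtain c where c: "\<forall>s\<in>S. c s \<in> K" "a - (\<Sum>s\<in>S. sm (c s) s) \<in> I" using S(2) by blast
    obtain d1 where d1: "(\<Sum>s\<in>S. rscale (Re (c s)) s) = lin_comb S' d1"
      using sum_rscale_eq_lin_comb[OF \<open>finite S'\<close> S(1), of id "\<lambda>s. Re (c s)"] unfolding S'_def by auto
    obtain d2 where d2: "(\<Sum>s\<in>S. rscale (Im (c s)) (sm \<i> s)) = lin_comb S' d2"
      using sum_rscale_eq_lin_comb[OF \<open>finite S'\<close> S(1), of "sm \<i>" "\<lambda>s. Im (c s)"] unfolding S'_def by auto
    have "(\<Sum>s\<in>S. sm (c s) s) = lin_comb S' (\<lambda>b. d1 b + d2 b)"
      using c(1) d1 d2 by (simp add: sm_eq_rscale_Re_Im sum.distrib lin_comb_add)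
    then show "\<exists>d. a - lin_comb S' d \<in> I" using c(2) by metis
  qed
  ultimately show ?thesis by blast
qed

end

context star_alg
begin

definition faithful_mod :: "'a set \<Rightarrow> ('a \<Rightarrow> real) \<Rightarrow> bool" where
  "faithful_mod I g \<longleftrightarrow> (\<forall>x y. g (x + y) = g x + g y) \<and> (\<forall>r x. g (rscale r x) = r * g x) \<and>
     (\<forall>x. g (st x) = g x) \<and> (\<forall>x\<in>ideal_plus_star I. g x = 0) \<and> (\<forall>a. a \<notin> I \<longrightarrow> g (st a * a) > 0)"

lemma contract_herm_coords:
  assumes "left_ideal K sm I" "spans_mod (ideal_plus_star I) E" "indep_mod (ideal_plus_star I) E" "e \<in> E"
  shows "contract D (\<lambda>k l. coord_mod (ideal_plus_star I) E (st k * l)) (\<lambda>k l. c k * c l) e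
       = coord_mod (ideal_plus_star I) E (st (lin_comb D c) * lin_comb D c) e"
  unfolding st_lin_comb_mul contract_def
  using assms(4) real_subspace_ideal_plus_star[OF assms(1)]
  by (simp add: coord_mod_sum[OF _ assms(2,3)] coord_mod_rscale[OF _ assms(2,3)])

lemma real_ideal_contract_nondeg:
  fixes n :: nat
  assumes LI: "left_ideal K sm I" and RI: "real_ideal st I" and inD: "indep_mod I D"
    and spE: "spans_mod (ideal_plus_star I) E" and inE: "indep_mod (ideal_plus_star I) E"
    and zero: "\<forall>e\<in>E. (\<Sum>j<n. contract D (\<lambda>k l. coord_mod (ideal_plus_star I) E (st k * l))
                                      (\<lambda>k l. cs j k * cs j l) e) = 0"
  shows "\<forall>j<n. \<forall>k\<in>D. cs j k = 0"
proof -
  define J where "J = ideal_plus_star I"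
  have rJ: "real_subspace J" unfolding J_def by (rule real_subspace_ideal_plus_star[OF LI])
  define x where "x = (\<Sum>j<n. st (lin_comb D (cs j)) * lin_comb D (cs j))"
  have "\<forall>e\<in>E. coord_mod J E x e = 0"
    using zero contract_herm_coords[OF LI spE inE] unfolding x_def J_def
    by (simp add: coord_mod_sum[OF real_subspace_ideal_plus_star[OF LI] spE inE])
  then have "lin_comb E (coord_mod J E x) = 0" by (intro lin_comb_zero) auto
  then have "x \<in> J" using coord_mod_spec[OF rJ, of E x] spE inE unfolding J_def by simp
  then have "\<forall>j<n. lin_comb D (cs j) \<in> I"
    using RI[unfolded real_ideal_def, rule_format, where a = "\<lambda>j. lin_comb D (cs j)"]
    unfolding J_def ideal_plus_star_def x_def by blast
  then show ?thesis using inD unfolding indep_mod_def by blast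
qed

lemma real_ideal_functional:
  assumes LI: "left_ideal K sm I" and RI: "real_ideal st I" and S: "finite S" "spans_mod I S"
  obtains f where "\<And>x y. f (x + y) = f x + f y" "\<And>r x. f (rscale r x) = r * f x"
    "\<And>x. x \<in> ideal_plus_star I \<Longrightarrow> f x = 0" "\<And>a. a \<notin> I \<Longrightarrow> f (st a * a) > 0"
proof -
  define J where "J = ideal_plus_star I"
  have rI: "real_subspace I" and rJ: "real_subspace J"
    using left_ideal_real_subspace[OF LI] real_subspace_ideal_plus_star[OF LI] by (simp_all add: J_def)
  obtain D where "D \<subseteq> S" and spD: "spans_mod I D" and inD: "indep_mod I D"
    using spans_mod_basis[OF rI S] by blast
  then have fD: "finite D" using S(1) finite_subset by blast
  have "spans_mod J S"
    using S(2) ideal_subset_plus_star[OF LI] unfolding spans_mod_def J_def by blast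
  then obtain E where "E \<subseteq> S" and spE: "spans_mod J E" and inE: "indep_mod J E"
    using spans_mod_basis[OF rJ S(1)] by blast
  then have fE: "finite E" using S(1) finite_subset by blast
  define co where "co = coord_mod J E"
  define \<beta> where "\<beta> = (\<lambda>k l. co (st k * l))"
  have contract_eq: "contract D \<beta> (\<lambda>k l. c k * c l) e = co (st (lin_comb D c) * lin_comb D c) e"
    if "e \<in> E" for c e
    using contract_herm_coords[OF LI spE[unfolded J_def] inE[unfolded J_def] that]
    unfolding \<beta>_def co_def J_def .
  have "\<forall>j<n. \<forall>k\<in>D. cs j k = 0"
    if "\<forall>e\<in>E. (\<Sum>j<n. contract D \<beta> (\<lambda>k l. cs j k * cs j l) e) = 0" for n :: nat and cs
    using real_ideal_contract_nondeg[OF LI RI inD spE[unfolded J_def] inE[unfolded J_def]] that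
    unfolding \<beta>_def co_def J_def by blast
  then obtain y where y: "\<And>c. (\<exists>k\<in>D. c k \<noteq> 0) \<Longrightarrow> (\<Sum>e\<in>E. y e * contract D \<beta> (\<lambda>k l. c k * c l) e) > 0"
    using contract_positive_functional[OF fD fE] by blast
  define f where "f = (\<lambda>x. \<Sum>e\<in>E. y e * co x e)"
  have f_add: "f (x + x') = f x + f x'" for x x'
    unfolding f_def co_def by (simp add: coord_mod_add[OF rJ spE inE] distrib_left sum.distrib)
  have f_rscale: "f (rscale r x) = r * f x" for r x
    unfolding f_def co_def by (simp add: coord_mod_rscale[OF rJ spE inE] sum_distrib_left algebra_simps)
  have f_J: "f x = 0" if "x \<in> J" for x
    unfolding f_def co_def using that by (simp add: coord_mod_in[OF rJ spE inE])
  have f_pos: "f (st a * a) > 0" if aI: "a \<notin> I" for a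
  proof -
    define c where "c = coord_mod I D a"
    have ac: "a - lin_comb D c \<in> I" unfolding c_def by (rule coord_mod_spec[OF rI spD inD])
    then have "\<exists>k\<in>D. c k \<noteq> 0" using aI lin_comb_zero[of D c] by fastforce
    then have "f (st (lin_comb D c) * lin_comb D c) > 0" using y unfolding f_def by (simp add: contract_eq)
    moreover have "st a * a - st (lin_comb D c) * lin_comb D c \<in> J"
      unfolding J_def by (rule herm_square_diff_mem[OF LI ac])
    then have "f (st a * a) = f (st (lin_comb D c) * lin_comb D c)"
      using f_J f_add by (metis diff_add_cancel add_0)
    ultimately show ?thesis by simp
  qed
  show thesis by (rule that[OF f_add f_rscale f_J[unfolded J_def] f_pos])
qed

lemma exists_faithful_mod:
  assumes "left_ideal K sm I" "real_ideal st I" "finite_codim K sm I"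
  shows "\<exists>g. faithful_mod I g"
proof -
  obtain S where "finite S" "spans_mod I S" using finite_codim_spans_mod[OF assms(3)] by blast
  then obtain f where f_add: "\<And>x y. f (x + y) = f x + f y" and f_rscale: "\<And>r x. f (rscale r x) = r * f x"
    and f_J: "\<And>x. x \<in> ideal_plus_star I \<Longrightarrow> f x = 0" and f_pos: "\<And>a. a \<notin> I \<Longrightarrow> f (st a * a) > 0"
    using real_ideal_functional[OF assms(1,2)] by metis
  define g where "g = (\<lambda>x. (f x + f (st x)) / 2)"
  have "faithful_mod I g" unfolding faithful_mod_def
  proof (intro conjI allI ballI impI)
    fix x y r a
    show "g (x + y) = g x + g y" by (simp add: g_def f_add st_add add_divide_distrib)
    show "g (rscale r x) = r * g x" by (simp add: g_def f_rscale st_rscale distrib_left)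
    show "g (st x) = g x" by (simp add: g_def st_st add.commute)
    show "g x = 0" if "x \<in> ideal_plus_star I" using that st_mem_plus_star by (simp add: g_def f_J)
    show "g (st a * a) > 0" if "a \<notin> I" using f_pos[OF that] by (simp add: g_def st_mul st_st)
  qed
  then show ?thesis by blast
qed

end

section \<open>The GNS construction\<close>

text \<open>A/I is represented by the span of a basis D modulo I. For complex scalars the faithful
  functional g is complexified as g z - i g (i z).\<close>

locale gns = star_alg +
  fixes I D :: "'a set" and g :: "'a \<Rightarrow> real"
  assumes left_ideal: "left_ideal K sm I" and finite_D: "finite D"
    and spans_D: "spans_mod I D" and indep_D: "indep_mod I D" and faithful: "faithful_mod I g"
begin

definition proj :: "'a \<Rightarrow> 'a" where
  "proj x = lin_comb D (coord_mod I D x)"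

definition space :: "'a set" where
  "space = range (lin_comb D)"

definition phi :: "'a \<Rightarrow> complex" where
  "phi z = (if K = UNIV then complex_of_real (g z) - \<i> * complex_of_real (g (sm \<i> z))
            else complex_of_real (g z))"

definition gns_vsm :: "complex \<Rightarrow> 'a \<Rightarrow> 'a" where
  "gns_vsm c w = proj (sm c w)"

definition gns_rep :: "'a \<Rightarrow> 'a \<Rightarrow> 'a" where
  "gns_rep a w = proj (a * w)"

definition gns_ip :: "'a \<Rightarrow> 'a \<Rightarrow> complex" where
  "gns_ip x y = phi (st y * x)"

lemma subspace_I: "real_subspace I"
  by (rule left_ideal_real_subspace[OF left_ideal])

lemma g_add: "g (x + y) = g x + g y"
  and g_rscale: "g (rscale r x) = r * g x"
  and g_st: "g (st x) = g x"
  and g_plus_star: "x \<in> ideal_plus_star I \<Longrightarrow> g x = 0"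
  and g_pos: "a \<notin> I \<Longrightarrow> g (st a * a) > 0"
  using faithful unfolding faithful_mod_def by blast+

lemma g_diff: "g (x - y) = g x - g y"
  using g_add[of "x - y" y] by simp

lemma g_neg: "g (- x) = - g x"
  using g_diff[of 0 x] g_add[of 0 0] by simp

lemma g_eq_mod: "x - y \<in> ideal_plus_star I \<Longrightarrow> g x = g y"
  using g_diff g_plus_star by fastforce

lemma g_herm_nonneg: "g (st a * a) \<ge> 0"
  using g_pos[of a] g_plus_star ideal_subset_plus_star[OF left_ideal left_ideal_mul[OF left_ideal]]
  by (cases "a \<in> I") auto

lemma proj_diff_mem: "x - proj x \<in> I"
  unfolding proj_def by (rule coord_mod_spec[OF subspace_I spans_D indep_D])

lemma proj_diff_mem': "proj x - x \<in> I"
  using real_subspace_neg[OF subspace_I proj_diff_mem[of x]] by simp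

lemma proj_eq: "x - y \<in> I \<Longrightarrow> proj x = proj y"
  unfolding proj_def by (rule lin_comb_cong) (rule coord_mod_eq[OF subspace_I spans_D indep_D])

lemma proj_add: "proj (x + y) = proj x + proj y"
  unfolding proj_def lin_comb_add[symmetric]
  by (rule lin_comb_cong) (rule coord_mod_add[OF subspace_I spans_D indep_D])

lemma proj_rscale: "proj (rscale r x) = rscale r (proj x)"
  unfolding proj_def lin_comb_scale[symmetric]
  by (rule lin_comb_cong) (rule coord_mod_rscale[OF subspace_I spans_D indep_D])

lemma proj_in_I: "x \<in> I \<Longrightarrow> proj x = 0"
  unfolding proj_def by (intro lin_comb_zero coord_mod_in[OF subspace_I spans_D indep_D])

lemma proj_eq_0_iff: "proj x = 0 \<longleftrightarrow> x \<in> I"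
  using proj_in_I[of x] proj_diff_mem[of x] by auto

lemma proj_in_space: "proj x \<in> space"
  unfolding space_def proj_def by blast

lemma proj_space: "w \<in> space \<Longrightarrow> proj w = w"
  unfolding space_def proj_def
  using coord_mod_unique[OF subspace_I spans_D indep_D] real_subspace_zero[OF subspace_I]
  by (auto intro!: lin_comb_cong)

lemma range_proj: "range proj = space"
  using proj_in_space proj_space by (metis image_subsetI range_subsetD subsetI subset_antisym rangeI)

lemma proj_sum: "proj (\<Sum>i\<in>A. f i) = (\<Sum>i\<in>A. proj (f i))"
  by (induction A rule: infinite_finite_induct)
    (auto simp: proj_add proj_in_I real_subspace_zero[OF subspace_I])

lemma proj_mul_proj: "proj (a * proj w) = proj (a * w)"
  by (rule proj_eq) (use left_ideal_mul[OF left_ideal proj_diff_mem'] in \<open>simp add: right_diff_distrib\<close>)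

lemma proj_sm_proj: "c \<in> K \<Longrightarrow> proj (sm c (proj w)) = proj (sm c w)"
  by (rule proj_eq) (use left_ideal_sm[OF left_ideal _ proj_diff_mem'] in \<open>simp add: sm_diff\<close>)

lemma space_add: "x \<in> space \<Longrightarrow> y \<in> space \<Longrightarrow> x + y \<in> space"
  by (metis proj_add proj_in_space proj_space)

lemma space_neg: "x \<in> space \<Longrightarrow> - x \<in> space"
  by (metis proj_rscale proj_in_space proj_space rscale_minus_one)

lemma phi_add: "phi (x + y) = phi x + phi y"
  unfolding phi_def by (auto simp: g_add sm_add algebra_simps)

lemma phi_eq_mod: "x - y \<in> ideal_plus_star I \<Longrightarrow> phi x = phi y"
proof (cases "K = UNIV")
  case True
  assume xy: "x - y \<in> ideal_plus_star I"
  then have "sm \<i> x - sm \<i> y \<in> ideal_plus_star I"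
    using sm_i_mem_plus_star[OF True left_ideal xy] True by (simp add: sm_diff)
  then show ?thesis using g_eq_mod[OF xy] g_eq_mod True unfolding phi_def by simp
qed (simp add: phi_def g_eq_mod)

lemma phi_eq_mod_I: "x - y \<in> I \<Longrightarrow> phi x = phi y"
  using phi_eq_mod ideal_subset_plus_star[OF left_ideal] by blast

lemma phi_rscale: "phi (rscale r z) = complex_of_real r * phi z"
proof (cases "K = UNIV")
  case True
  then have "sm \<i> (rscale r z) = rscale r (sm \<i> z)"
    unfolding rscale_def using sm_mult_scalar by (metis UNIV_I mult.commute)
  then show ?thesis unfolding phi_def using True by (simp add: g_rscale algebra_simps)
qed (simp add: phi_def g_rscale)

lemma phi_sm_i: "K = UNIV \<Longrightarrow> phi (sm \<i> z) = \<i> * phi z"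
proof -
  assume K: "K = UNIV"
  then have "sm \<i> (sm \<i> z) = - z"
    using sm_mult_scalar[of \<i> \<i> z] sm_neg_scalar[of 1 z] sm_one by simp
  then show ?thesis unfolding phi_def using K by (simp add: g_neg algebra_simps)
qed

lemma phi_sm: "c \<in> K \<Longrightarrow> phi (sm c z) = c * phi z"
proof -
  assume c: "c \<in> K"
  have "phi (sm c z) = complex_of_real (Re c) * phi z + complex_of_real (Im c) * phi (sm \<i> z)"
    using sm_eq_rscale_Re_Im[OF c] by (simp add: phi_add phi_rscale)
  also have "\<dots> = c * phi z"
  proof (cases "K = UNIV")
    case True
    have "complex_of_real (Re c) + complex_of_real (Im c) * \<i> = c" by (simp add: complex_eq_iff)
    moreover have "complex_of_real (Re c) * phi z + complex_of_real (Im c) * phi (sm \<i> z)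
        = (complex_of_real (Re c) + complex_of_real (Im c) * \<i>) * phi z"
      by (simp add: phi_sm_i[OF True] algebra_simps)
    ultimately show ?thesis by simp
  next
    case False
    then have "Im c = 0" using c K_cases by (auto simp: complex_is_Real_iff)
    then show ?thesis by (simp add: complex_eq_iff)
  qed
  finally show ?thesis .
qed

lemma phi_st: "phi (st z) = cnj (phi z)"
proof (cases "K = UNIV")
  case True
  have "sm \<i> (st z) = st (sm (- \<i>) z)" using st_sm True by simp
  also have "\<dots> = - st (sm \<i> z)" using sm_neg_scalar True st_neg by simp
  finally show ?thesis unfolding phi_def using True by (simp add: g_st g_neg)
qed (simp add: phi_def g_st)

lemma phi_herm: "phi (st x * x) = complex_of_real (g (st x * x))"
proof -
  have "st (st x * x) = st x * x" by (simp add: st_mul st_st)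
  then have "phi (st x * x) = cnj (phi (st x * x))" using phi_st by metis
  then have "Im (phi (st x * x)) = 0" by (simp add: complex_eq_iff)
  moreover have "Re (phi (st x * x)) = g (st x * x)" unfolding phi_def by simp
  ultimately show ?thesis by (simp add: complex_eq_iff)
qed

end

context gns
begin

lemma gns_ip_vsm: "c \<in> K \<Longrightarrow> gns_ip (gns_vsm c x) y = c * gns_ip x y"
proof -
  assume c: "c \<in> K"
  have "st y * proj (sm c x) - st y * sm c x \<in> I"
    using left_ideal_mul[OF left_ideal proj_diff_mem'] by (simp add: right_diff_distrib)
  then have "phi (st y * proj (sm c x)) = phi (st y * sm c x)" by (rule phi_eq_mod_I)
  then show ?thesis unfolding gns_ip_def gns_vsm_def by (simp add: sm_mul_right[OF c, symmetric] phi_sm[OF c])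
qed

lemma gns_ip_adjoint: "gns_ip (gns_rep a x) y = gns_ip x (gns_rep (st a) y)"
proof -
  have "st y * proj (a * x) - st y * (a * x) \<in> I"
    using left_ideal_mul[OF left_ideal proj_diff_mem'] by (simp add: right_diff_distrib)
  then have l: "phi (st y * proj (a * x)) = phi (st y * (a * x))" by (rule phi_eq_mod_I)
  have "st (proj (st a * y)) * x - st (st a * y) * x = st (proj (st a * y) - st a * y) * x"
    by (simp add: st_diff left_diff_distrib)
  also have "\<dots> \<in> ideal_plus_star I" by (rule st_mul_mem_plus_star[OF left_ideal proj_diff_mem'])
  finally have r: "phi (st (proj (st a * y)) * x) = phi (st (st a * y) * x)" by (rule phi_eq_mod)
  have "st (st a * y) * x = st y * (a * x)" by (simp add: st_mul st_st mult.assoc)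
  then show ?thesis unfolding gns_ip_def gns_rep_def using l r by simp
qed

lemma gns_pre_hilbert: "pre_hilbert K space gns_vsm gns_ip"
  unfolding pre_hilbert_def
proof (intro conjI ballI allI impI)
  show "0 \<in> space" using proj_in_space[of 0] proj_in_I[OF real_subspace_zero[OF subspace_I]] by simp
  show "\<And>x y. x \<in> space \<Longrightarrow> y \<in> space \<Longrightarrow> x + y \<in> space" by (rule space_add)
  show "\<And>x. x \<in> space \<Longrightarrow> - x \<in> space" by (rule space_neg)
  show "\<And>c x. gns_vsm c x \<in> space" unfolding gns_vsm_def by (rule proj_in_space)
  show "\<And>c x y. c \<in> K \<Longrightarrow> gns_vsm c (x + y) = gns_vsm c x + gns_vsm c y"
    unfolding gns_vsm_def by (simp add: sm_add proj_add)
  show "\<And>c d x. c \<in> K \<Longrightarrow> d \<in> K \<Longrightarrow> gns_vsm (c + d) x = gns_vsm c x + gns_vsm d x"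
    unfolding gns_vsm_def by (simp add: sm_add_scalar proj_add)
  show "\<And>c d x. c \<in> K \<Longrightarrow> d \<in> K \<Longrightarrow> gns_vsm (c * d) x = gns_vsm c (gns_vsm d x)"
    unfolding gns_vsm_def by (simp add: sm_mult_scalar proj_sm_proj)
  show "\<And>x. x \<in> space \<Longrightarrow> gns_vsm 1 x = x" unfolding gns_vsm_def by (simp add: sm_one proj_space)
  show "\<And>x y. gns_ip x y \<in> K" unfolding gns_ip_def phi_def using K_cases by auto
  show "\<And>x y z. gns_ip (x + y) z = gns_ip x z + gns_ip y z"
    unfolding gns_ip_def by (simp add: distrib_left phi_add)
  show "\<And>c x y. c \<in> K \<Longrightarrow> gns_ip (gns_vsm c x) y = c * gns_ip x y" by (rule gns_ip_vsm)
  show "\<And>x y. gns_ip y x = cnj (gns_ip x y)" unfolding gns_ip_def by (metis phi_st st_mul st_st)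
  show "\<And>x. Im (gns_ip x x) = 0" unfolding gns_ip_def by (simp add: phi_herm)
  show "\<And>x. 0 \<le> Re (gns_ip x x)" unfolding gns_ip_def by (simp add: phi_herm g_herm_nonneg)
  show "x = 0" if "x \<in> space" "gns_ip x x = 0" for x
  proof -
    have "x \<in> I" using that(2) g_pos unfolding gns_ip_def phi_herm by fastforce
    then show ?thesis using proj_in_I proj_space[OF that(1)] by simp
  qed
qed

lemma gns_star_rep: "star_rep K sm st space gns_vsm gns_ip gns_rep"
  unfolding star_rep_def
proof (intro conjI ballI allI impI)
  show "pre_hilbert K space gns_vsm gns_ip" by (rule gns_pre_hilbert)
  show "\<And>a x. gns_rep a x \<in> space" unfolding gns_rep_def by (rule proj_in_space)
  show "\<And>a x y. gns_rep a (x + y) = gns_rep a x + gns_rep a y"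
    unfolding gns_rep_def by (simp add: distrib_left proj_add)
  show "\<And>a c x. c \<in> K \<Longrightarrow> gns_rep a (gns_vsm c x) = gns_vsm c (gns_rep a x)"
    unfolding gns_rep_def gns_vsm_def by (simp add: proj_mul_proj proj_sm_proj sm_mul_right)
  show "\<And>x. x \<in> space \<Longrightarrow> gns_rep 1 x = x" unfolding gns_rep_def by (simp add: proj_space)
  show "\<And>a b x. gns_rep (a + b) x = gns_rep a x + gns_rep b x"
    unfolding gns_rep_def by (simp add: distrib_right proj_add)
  show "\<And>a c x. c \<in> K \<Longrightarrow> gns_rep (sm c a) x = gns_vsm c (gns_rep a x)"
    unfolding gns_rep_def gns_vsm_def by (simp add: proj_sm_proj sm_mul_left)
  show "\<And>a b x. gns_rep (a * b) x = gns_rep a (gns_rep b x)"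
    unfolding gns_rep_def by (simp add: proj_mul_proj mult.assoc)
  show "\<And>a x y. gns_ip (gns_rep a x) y = gns_ip x (gns_rep (st a) y)" by (rule gns_ip_adjoint)
qed

lemma gns_fin_dim: "fin_dim K space gns_vsm"
  unfolding fin_dim_def
proof (intro exI conjI)
  show "D \<subseteq> space"
  proof
    fix d assume "d \<in> D"
    then have "d = lin_comb D (\<lambda>b. if b = d then 1 else 0)"
      using lin_comb_indicator[OF finite_D] rscale_one by simp
    then show "d \<in> space" unfolding space_def by blast
  qed
  show "\<forall>x\<in>space. \<exists>c. (\<forall>s\<in>D. c s \<in> K) \<and> x = (\<Sum>s\<in>D. gns_vsm (c s) s)"
  proof
    fix x assume x: "x \<in> space"
    then obtain r where r: "x = lin_comb D r" unfolding space_def by blast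
    have "(\<Sum>s\<in>D. gns_vsm (complex_of_real (r s)) s) = proj (lin_comb D r)"
      unfolding gns_vsm_def lin_comb_def rscale_def by (simp add: proj_sum)
    then have "x = (\<Sum>s\<in>D. gns_vsm (complex_of_real (r s)) s)" using proj_space[OF x] r by simp
    then show "\<exists>c. (\<forall>s\<in>D. c s \<in> K) \<and> x = (\<Sum>s\<in>D. gns_vsm (c s) s)"
      using of_real_in_K by (intro exI[of _ "\<lambda>s. complex_of_real (r s)"]) simp
  qed
qed (rule finite_D)

lemma gns_rep_proj_one: "gns_rep a (proj 1) = proj a"
  unfolding gns_rep_def using proj_mul_proj[of a 1] by simp

end

context star_alg
begin

lemma real_ideal_gns:
  assumes "left_ideal K sm I" "real_ideal st I" "finite_codim K sm I"
  shows "\<exists>(V :: 'a set) vsm ip p v. star_rep K sm st V vsm ip p \<and> fin_dim K V vsm \<and> v \<in> V \<and>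
           I = I_left p v \<and> (\<lambda>a. p a v) ` UNIV = V"
proof -
  obtain S where "finite S" "spans_mod I S" using finite_codim_spans_mod[OF assms(3)] by blast
  then obtain D where "D \<subseteq> S" "spans_mod I D" "indep_mod I D"
    using spans_mod_basis[OF left_ideal_real_subspace[OF assms(1)]] by blast
  moreover obtain g where "faithful_mod I g" using exists_faithful_mod[OF assms] by blast
  ultimately interpret gns K sm st I D g
    using assms(1) \<open>finite S\<close> finite_subset by unfold_locales blast+
  have "I = I_left gns_rep (proj 1)"
    unfolding I_left_def gns_rep_proj_one using proj_eq_0_iff by blast
  moreover have "(\<lambda>a. gns_rep a (proj 1)) ` UNIV = space"
    unfolding gns_rep_proj_one by (rule range_proj)
  ultimately show ?thesis
    by (intro exI[of _ space] exI[of _ gns_vsm] exI[of _ gns_ip] exI[of _ gns_rep] exI[of _ "proj 1"]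
        conjI gns_star_rep gns_fin_dim proj_in_space)
qed

end

section \<open>Cyclic representations\<close>

lemma pre_hilbertD:
  assumes "pre_hilbert K V vsm ip"
  shows pre_hilbert_zero: "0 \<in> V"
    and pre_hilbert_add: "x \<in> V \<Longrightarrow> y \<in> V \<Longrightarrow> x + y \<in> V"
    and pre_hilbert_ip_add: "x \<in> V \<Longrightarrow> y \<in> V \<Longrightarrow> z \<in> V \<Longrightarrow> ip (x + y) z = ip x z + ip y z"
    and pre_hilbert_ip_cnj: "x \<in> V \<Longrightarrow> y \<in> V \<Longrightarrow> ip y x = cnj (ip x y)"
    and pre_hilbert_ip_nonneg: "x \<in> V \<Longrightarrow> Im (ip x x) = 0 \<and> Re (ip x x) \<ge> 0"
    and pre_hilbert_ip_definite: "x \<in> V \<Longrightarrow> ip x x = 0 \<Longrightarrow> x = 0"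
  by (insert assms, unfold pre_hilbert_def, (elim conjE, metis)+)

lemma pre_hilbert_sum: "pre_hilbert K V vsm ip \<Longrightarrow> (\<And>i. i \<in> A \<Longrightarrow> f i \<in> V) \<Longrightarrow> (\<Sum>i\<in>A. f i) \<in> V"
  by (induction A rule: infinite_finite_induct) (auto simp: pre_hilbert_zero pre_hilbert_add)

lemma pre_hilbert_ip_zero_left:
  assumes "pre_hilbert K V vsm ip" "y \<in> V"
  shows "ip 0 y = 0"
  using pre_hilbert_ip_add[OF assms(1) pre_hilbert_zero[OF assms(1)] pre_hilbert_zero[OF assms(1)] assms(2)]
  by simp

lemma pre_hilbert_ip_zero_right:
  assumes "pre_hilbert K V vsm ip" "x \<in> V"
  shows "ip x 0 = 0"
  using pre_hilbert_ip_cnj[OF assms(1) pre_hilbert_zero[OF assms(1)] assms(2)]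
    pre_hilbert_ip_zero_left[OF assms] by simp

lemma pre_hilbert_ip_sum:
  assumes "pre_hilbert K V vsm ip" "y \<in> V" "\<And>i. i \<in> A \<Longrightarrow> f i \<in> V"
  shows "ip (\<Sum>i\<in>A. f i) y = (\<Sum>i\<in>A. ip (f i) y)"
  using assms(3)
proof (induction A rule: infinite_finite_induct)
  case (insert i A)
  have "ip (\<Sum>i\<in>insert i A. f i) y = ip (f i + (\<Sum>i\<in>A. f i)) y" using insert.hyps by simp
  also have "\<dots> = ip (f i) y + ip (\<Sum>i\<in>A. f i) y"
  proof (rule pre_hilbert_ip_add[OF assms(1) _ _ assms(2)])
    show "f i \<in> V" "(\<Sum>i\<in>A. f i) \<in> V"
      using insert.prems by (auto intro: pre_hilbert_sum[OF assms(1)])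
  qed
  finally show ?case using insert by simp
qed (simp_all add: pre_hilbert_ip_zero_left[OF assms(1,2)])

lemma star_repD:
  assumes "star_rep K sm st V vsm ip p"
  shows star_rep_pre_hilbert: "pre_hilbert K V vsm ip"
    and star_rep_closed: "x \<in> V \<Longrightarrow> p a x \<in> V"
    and star_rep_add: "x \<in> V \<Longrightarrow> p (a + b) x = p a x + p b x"
    and star_rep_sm: "c \<in> K \<Longrightarrow> x \<in> V \<Longrightarrow> p (sm c a) x = vsm c (p a x)"
    and star_rep_mul: "x \<in> V \<Longrightarrow> p (a * b) x = p a (p b x)"
    and star_rep_adjoint: "x \<in> V \<Longrightarrow> y \<in> V \<Longrightarrow> ip (p a x) y = ip x (p (st a) y)"
  by (insert assms, unfold star_rep_def, (elim conjE, metis)+)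

lemma star_rep_zero: "star_rep K sm st V vsm ip p \<Longrightarrow> x \<in> V \<Longrightarrow> p 0 x = 0"
  using star_rep_add[of K sm st V vsm ip p x 0 0] by simp

lemma star_rep_diff: "star_rep K sm st V vsm ip p \<Longrightarrow> x \<in> V \<Longrightarrow> p (a - b) x = p a x - p b x"
  using star_rep_add[of K sm st V vsm ip p x "a - b" b] by (simp add: algebra_simps)

lemma star_rep_sum:
  "star_rep K sm st V vsm ip p \<Longrightarrow> x \<in> V \<Longrightarrow> p (\<Sum>i\<in>A. f i) x = (\<Sum>i\<in>A. p (f i) x)"
  by (induction A rule: infinite_finite_induct) (auto simp: star_rep_zero star_rep_add)

text \<open>For a cyclic vector v, elements mapped onto a spanning set of V span A modulo the annihilator.\<close>

lemma I_left_finite_codim: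
  assumes rep: "star_rep K sm st V vsm ip p" and fd: "fin_dim K V vsm" and v: "v \<in> V"
    and cyclic: "(\<lambda>a. p a v) ` UNIV = V"
  shows "finite_codim K sm (I_left p v)"
proof -
  obtain S where fS: "finite S" and SV: "S \<subseteq> V"
    and span: "\<And>x. x \<in> V \<Longrightarrow> \<exists>c. (\<forall>s\<in>S. c s \<in> K) \<and> x = (\<Sum>s\<in>S. vsm (c s) s)"
    using fd unfolding fin_dim_def by blast
  obtain b where pb: "\<And>s. s \<in> S \<Longrightarrow> p (b s) v = s" using SV cyclic by (metis image_iff subsetD)
  then have inj: "inj_on b S" by (metis inj_onI)
  show ?thesis unfolding finite_codim_def
  proof (rule exI[of _ "b ` S"], intro conjI allI)
    show "finite (b ` S)" using fS by simp
    fix a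
    obtain c where c: "\<forall>s\<in>S. c s \<in> K" "p a v = (\<Sum>s\<in>S. vsm (c s) s)"
      using span star_rep_closed[OF rep v] by blast
    define c' where "c' = (\<lambda>t. c (p t v))"
    have "(\<Sum>t\<in>b ` S. sm (c' t) t) = (\<Sum>s\<in>S. sm (c s) (b s))"
      unfolding sum.reindex[OF inj] c'_def by (rule sum.cong) (auto simp: pb)
    moreover have "p (\<Sum>s\<in>S. sm (c s) (b s)) v = (\<Sum>s\<in>S. vsm (c s) s)"
      unfolding star_rep_sum[OF rep v] using star_rep_sm[OF rep _ v] c(1) pb by (auto intro!: sum.cong)
    ultimately have "p (a - (\<Sum>t\<in>b ` S. sm (c' t) t)) v = 0"
      using c(2) star_rep_diff[OF rep v] by simp
    then show "\<exists>c. (\<forall>s\<in>b ` S. c s \<in> K) \<and> a - (\<Sum>s\<in>b ` S. sm (c s) s) \<in> I_left p v"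
      using c(1) pb unfolding I_left_def by (intro exI[of _ c']) (auto simp: c'_def)
  qed
qed

lemma two_sided_ideal_subset_ker_rep:
  assumes rep: "star_rep K sm st V vsm ip p" and v: "v \<in> V" and cyclic: "(\<lambda>a. p a v) ` UNIV = V"
    and J: "two_sided_ideal K sm J" "J \<subseteq> I_left p v"
  shows "J \<subseteq> ker_rep V p"
  unfolding ker_rep_def
proof (intro subsetI CollectI ballI)
  fix a x assume "a \<in> J" "x \<in> V"
  then obtain b where b: "x = p b v" using cyclic by blast
  have "a * b \<in> J" using J(1) \<open>a \<in> J\<close> unfolding two_sided_ideal_def by blast
  then show "p a x = 0" using J(2) star_rep_mul[OF rep v] unfolding b I_left_def by auto
qed

lemma ker_rep_eq_I_left:
  assumes rep: "star_rep K sm st V vsm ip p" and v: "v \<in> V" and cyclic: "(\<lambda>a. p a v) ` UNIV = V"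
    and J: "two_sided_ideal K sm (I_left p v)"
  shows "ker_rep V p = I_left p v"
  using two_sided_ideal_subset_ker_rep[OF rep v cyclic J] v unfolding ker_rep_def I_left_def by blast

context star_alg
begin

lemma I_left_real_ideal:
  assumes rep: "star_rep K sm st V vsm ip p" and v: "v \<in> V"
  shows "real_ideal st (I_left p v)"
  unfolding real_ideal_def
proof (rule allI, rule allI, rule impI)
  fix n :: nat and a :: "nat \<Rightarrow> 'a"
  note ph = star_rep_pre_hilbert[OF rep]
  assume "(\<Sum>j<n. st (a j) * a j) \<in> {x + st y |x y. x \<in> I_left p v \<and> y \<in> I_left p v}"
  then obtain x y where xy: "(\<Sum>j<n. st (a j) * a j) = x + st y" "p x v = 0" "p y v = 0"
    unfolding I_left_def by blast
  define w where "w = (\<lambda>j. p (a j) v)"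
  have wV: "w j \<in> V" for j unfolding w_def using star_rep_closed[OF rep v] .
  have "ip (p (\<Sum>j<n. st (a j) * a j) v) v = (\<Sum>j<n. ip (p (st (a j)) (w j)) v)"
    unfolding star_rep_sum[OF rep v] w_def star_rep_mul[OF rep v]
    by (rule pre_hilbert_ip_sum[OF ph v]) (rule star_rep_closed[OF rep wV[unfolded w_def]])
  also have "\<dots> = (\<Sum>j<n. ip (w j) (w j))"
    using star_rep_adjoint[OF rep wV v] by (simp add: st_st w_def)
  finally have "(\<Sum>j<n. ip (w j) (w j)) = ip (p (st y) v) v"
    using xy star_rep_add[OF rep v] by simp
  also have "\<dots> = 0"
    using star_rep_adjoint[OF rep v v, of "st y"] xy(3) pre_hilbert_ip_zero_right[OF ph v] by (simp add: st_st)
  finally have "(\<Sum>j<n. Re (ip (w j) (w j))) = 0" by (metis Re_sum zero_complex.sel(1))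
  then have "\<forall>j<n. Re (ip (w j) (w j)) = 0"
    using sum_nonneg_eq_0_iff[of "{..<n}" "\<lambda>j. Re (ip (w j) (w j))"] pre_hilbert_ip_nonneg[OF ph wV] by simp
  then have "\<forall>j<n. w j = 0"
    using pre_hilbert_ip_nonneg[OF ph wV] pre_hilbert_ip_definite[OF ph wV] by (simp add: complex_eq_iff)
  then show "\<forall>j<n. a j \<in> I_left p v" unfolding I_left_def w_def by simp
qed

end

theorem lemma5p1:
  fixes K :: "complex set" and sm :: "complex \<Rightarrow> 'a::ring_1 \<Rightarrow> 'a" and st :: "'a \<Rightarrow> 'a"
    and I :: "'a set"
  assumes "star_algebra K sm st" and "left_ideal K sm I"
  shows "(real_ideal st I \<and> finite_codim K sm I \<longleftrightarrow>
           (\<exists>(V :: 'a set) vsm ip p v. star_rep K sm st V vsm ip p \<and> fin_dim K V vsm \<and> v \<in> V \<and>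
              I = I_left p v \<and> (\<lambda>a. p a v) ` UNIV = V))
       \<and> (\<forall>(V :: 'v::ab_group_add set) vsm ip p v. star_rep K sm st V vsm ip p \<and> fin_dim K V vsm \<and>
              v \<in> V \<and> I = I_left p v \<and> (\<lambda>a. p a v) ` UNIV = V
            \<longrightarrow> real_ideal st I \<and> finite_codim K sm I)
       \<and> (\<forall>(V :: 'v set) vsm ip p v J. star_rep K sm st V vsm ip p \<and> v \<in> V \<and>
              (\<lambda>a. p a v) ` UNIV = V \<and> two_sided_ideal K sm J \<and> J \<subseteq> I_left p v
            \<longrightarrow> J \<subseteq> ker_rep V p)
       \<and> (\<forall>(V :: 'v set) vsm ip p v. star_rep K sm st V vsm ip p \<and> v \<in> V \<and>
              (\<lambda>a. p a v) ` UNIV = V \<and> two_sided_ideal K sm (I_left p v)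
            \<longrightarrow> ker_rep V p = I_left p v)"
proof -
  interpret star_alg K sm st by (rule star_alg.intro) (rule assms(1))
  show ?thesis
  proof (intro conjI allI impI)
    show "real_ideal st I \<and> finite_codim K sm I \<longleftrightarrow>
        (\<exists>(V :: 'a set) vsm ip p v. star_rep K sm st V vsm ip p \<and> fin_dim K V vsm \<and> v \<in> V \<and>
           I = I_left p v \<and> (\<lambda>a. p a v) ` UNIV = V)"
    proof
      assume "real_ideal st I \<and> finite_codim K sm I"
      then show "\<exists>(V :: 'a set) vsm ip p v. star_rep K sm st V vsm ip p \<and> fin_dim K V vsm \<and> v \<in> V \<and>
          I = I_left p v \<and> (\<lambda>a. p a v) ` UNIV = V"
        by (elim conjE) (rule real_ideal_gns[OF assms(2)])
    next
      assume "\<exists>(V :: 'a set) vsm ip p v. star_rep K sm st V vsm ip p \<and> fin_dim K V vsm \<and> v \<in> V \<and>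
          I = I_left p v \<and> (\<lambda>a. p a v) ` UNIV = V"
      then obtain V :: "'a set" and vsm ip p v where rep: "star_rep K sm st V vsm ip p"
        and fd: "fin_dim K V vsm" and v: "v \<in> V" and I: "I = I_left p v" and cyclic: "(\<lambda>a. p a v) ` UNIV = V"
        by (elim exE conjE) blast
      show "real_ideal st I \<and> finite_codim K sm I"
        unfolding I using I_left_real_ideal[OF rep v] I_left_finite_codim[OF rep fd v cyclic] ..
    qed
  next
    fix V :: "'v set" and vsm ip p v
    assume rep: "star_rep K sm st V vsm ip p \<and> fin_dim K V vsm \<and> v \<in> V \<and> I = I_left p v \<and>
      (\<lambda>a. p a v) ` UNIV = V"
    then have I: "I = I_left p v" by blast
    show "real_ideal st I" using rep unfolding I by (elim conjE) (rule I_left_real_ideal)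
    show "finite_codim K sm I" using rep unfolding I by (elim conjE) (rule I_left_finite_codim)
  next
    fix V :: "'v set" and vsm ip p v J
    assume "star_rep K sm st V vsm ip p \<and> v \<in> V \<and> (\<lambda>a. p a v) ` UNIV = V \<and> two_sided_ideal K sm J \<and> J \<subseteq> I_left p v"
    then show "J \<subseteq> ker_rep V p" by (elim conjE) (rule two_sided_ideal_subset_ker_rep)
  next
    fix V :: "'v set" and vsm ip p v
    assume "star_rep K sm st V vsm ip p \<and> v \<in> V \<and> (\<lambda>a. p a v) ` UNIV = V \<and> two_sided_ideal K sm (I_left p v)"
    then show "ker_rep V p = I_left p v" by (elim conjE) (rule ker_rep_eq_I_left)
  qed
qed

end
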